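(* Let $G$ and $G'$ act on simply connected scwols $\mathcal X$ and $\mathcal X'$ with quotients $\mathcal Y=G\backslash\mathcal X$ and $\mathcal Y'=G'\backslash\mathcal X'$, let $L:\mathcal X\to\mathcal X'$ be a morphism of scwols equivariant with respect to a homomorphism $\Lambda:G\to G'$, with induced morphism $l:\mathcal Y\to\mathcal Y'$, and let $\lambda=\lambda_{C_\bullet,C'_\bullet,N_\bullet}:G(\mathcal Y)_{C_\bullet}\to G'(\mathcal Y')_{C'_\bullet}$ be the induced morphism for some choices $C_\bullet$, $C'_\bullet$, $N_\bullet$. Then $\lambda$ is a covering of complexes of groups if and only if $\Lambda$ is injective and $L$ is an isomorphism of scwols.
   Context: Scwols. A scwol $\mathcal X$ consists of a set $V(\mathcal X)$ of vertices, a set $E(\mathcal X)$ of edges, maps $i,t:E(\mathcal X)\to V(\mathcal X)$, and a composition $(a,b)\mapsto ab\in E(\mathcal X)$ defined on $E^{(2)}(\mathcal X)=\{(a,b): i(a)=t(b)\}$, such that $i(ab)=i(b)$, $t(ab)=t(a)$, $(ab)c=a(bc)$ whenever defined, and $i(a)\neq t(a)$ for all $a$. $\mathcal X$ is connected (resp. simply connected) if its geometric realization (one $k$-simplex for each sequence of $k$ composable edges) is. A morphism of scwols $l$ sends vertices to vertices and edges to edges and commutes with $i$, $t$ and composition; it is nondegenerate if for every vertex $\sigma$ it maps the edges with initial vertex $\sigma$ bijectively onto the edges with initial vertex $l(\sigma)$; an isomorphism is an invertible morphism. An action of a group $G$ on $\mathcal X$ is a homomorphism from $G$ to the automorphism group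 of $\mathcal X$ such that $g\cdot i(a)\neq t(a)$ for all $g,a$, and $g\cdot i(a)=i(a)$ implies $g\cdot a=a$. The quotient scwol $G\backslash\mathcal X$ has as vertices and edges the $G$-orbits with induced structure; a $\Lambda$-equivariant morphism $L$ ($L(g\alpha)=\Lambda(g)L(\alpha)$) induces a morphism $l$ of quotients. Complexes of groups. A complex of groups $G(\mathcal Y)=(G_\sigma,\psi_a,g_{a,b})$ over $\mathcal Y$ consists of groups $G_\sigma$, injective homomorphisms $\psi_a:G_{i(a)}\to G_{t(a)}$ and elements $g_{a,b}\in G_{t(a)}$ with $\mathrm{Ad}(g_{a,b})\psi_{ab}=\psi_a\psi_b$ and $\psi_a(g_{b,c})g_{a,bc}=g_{a,b}g_{ab,c}$. A morphism $\phi=(\phi_\sigma,\phi(a)):G(\mathcal Y)\to G'(\mathcal Y')$ over $l$ consists of homomorphisms $\phi_\sigma:G_\sigma\to G'_{l(\sigma)}$ and elements $\phi(a)\in G'_{t(l(a))}$ with $\mathrm{Ad}(\phi(a))\psi'_{l(a)}\phi_{i(a)}=\phi_{t(a)}\psi_a$ and $\phi_{t(a)}(g_{a,b})\phi(ab)=\phi(a)\psi'_{l(a)}(\phi(b))g'_{l(a),l(b)}$. A morphism $\phi$ over a nondegenerate $l$ with $\mathcal Y'$ connected is a covering if every $\phi_\sigma$ is injective and for every $a'\in E(\mathcal Y')$ and $\sigma\in V(\mathcal Y)$ with $t(a')=l(\sigma)$ the map $\coprod_{a\in l^{-1}(a'),\,t(a)=\sigma}G_\sigma/\psi_a(G_{i(a)})\to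 G'_{l(\sigma)}/\psi'_{a'}(G'_{i(a')})$ induced by $g\mapsto\phi_\sigma(g)\phi(a)$ is bijective. Associated complex of groups and induced morphism. If $G$ acts on $\mathcal X$ with quotient $\mathcal Y$, a choice $C_\bullet$ consists of a lift $\bar\sigma\in V(\mathcal X)$ of each $\sigma\in V(\mathcal Y)$ and, for each $a\in E(\mathcal Y)$, with $\bar a$ the unique lift of $a$ with $i(\bar a)=\overline{i(a)}$, an element $h_a\in G$ with $h_a\cdot t(\bar a)=\overline{t(a)}$. Then $G(\mathcal Y)_{C_\bullet}$ has $G_\sigma=\mathrm{Stab}_G(\bar\sigma)$, $\psi_a(g)=h_agh_a^{-1}$, $g_{a,b}=h_ah_bh_{ab}^{-1}$. Similarly $C'_\bullet=(\overline{\sigma'},h'_{a'})$ for $G'$ on $\mathcal X'$. A choice $N_\bullet=(k_\sigma)_{\sigma\in V(\mathcal Y)}$ consists of $k_\sigma\in G'$ with $k_\sigma\cdot L(\bar\sigma)=\overline{l(\sigma)}$; the induced morphism $\lambda_{C_\bullet,C'_\bullet,N_\bullet}$ over $l$ is $\lambda_\sigma(g)=k_\sigma\Lambda(g)k_\sigma^{-1}$, $\lambda(a)=k_{t(a)}\Lambda(h_a)k_{i(a)}^{-1}h'^{-1}_{l(a)}$. *)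

theory Defs
  imports "HOL-Algebra.Left_Coset"
begin

section \<open>Small categories without loops (scwols)\<close>

record ('v, 'e) scwol =
  sVert :: "'v set"
  sEdge :: "'e set"
  sIni  :: "'e \<Rightarrow> 'v"
  sTer  :: "'e \<Rightarrow> 'v"
  sComp :: "'e \<Rightarrow> 'e \<Rightarrow> 'e"

definition composable :: "('v, 'e) scwol \<Rightarrow> 'e \<Rightarrow> 'e \<Rightarrow> bool" where
  "composable X a b \<longleftrightarrow> a \<in> sEdge X \<and> b \<in> sEdge X \<and> sIni X a = sTer X b"

definition is_scwol :: "('v, 'e) scwol \<Rightarrow> bool" where
  "is_scwol X \<longleftrightarrow>
     (\<forall>a\<in>sEdge X. sIni X a \<in> sVert X \<and> sTer X a \<in> sVert X) \<and>
     (\<forall>a b. composable X a b \<longrightarrow>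
        sComp X a b \<in> sEdge X \<and> sIni X (sComp X a b) = sIni X b \<and> sTer X (sComp X a b) = sTer X a) \<and>
     (\<forall>a b c. composable X a b \<and> composable X b c \<longrightarrow>
        sComp X (sComp X a b) c = sComp X a (sComp X b c)) \<and>
     (\<forall>a\<in>sEdge X. sIni X a \<noteq> sTer X a)"

definition scwol_morph ::
  "('v, 'e) scwol \<Rightarrow> ('w, 'f) scwol \<Rightarrow> ('v \<Rightarrow> 'w) \<Rightarrow> ('e \<Rightarrow> 'f) \<Rightarrow> bool" where
  "scwol_morph X Y fv fe \<longleftrightarrow>
     fv ` sVert X \<subseteq> sVert Y \<and> fe ` sEdge X \<subseteq> sEdge Y \<and>
     (\<forall>a\<in>sEdge X. sIni Y (fe a) = fv (sIni X a) \<and> sTer Y (fe a) = fv (sTer X a)) \<and>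
     (\<forall>a b. composable X a b \<longrightarrow> fe (sComp X a b) = sComp Y (fe a) (fe b))"

definition scwol_nondeg ::
  "('v, 'e) scwol \<Rightarrow> ('w, 'f) scwol \<Rightarrow> ('v \<Rightarrow> 'w) \<Rightarrow> ('e \<Rightarrow> 'f) \<Rightarrow> bool" where
  "scwol_nondeg X Y fv fe \<longleftrightarrow> scwol_morph X Y fv fe \<and>
     (\<forall>\<sigma>\<in>sVert X. bij_betw fe {a \<in> sEdge X. sIni X a = \<sigma>} {a \<in> sEdge Y. sIni Y a = fv \<sigma>})"

definition scwol_iso ::
  "('v, 'e) scwol \<Rightarrow> ('w, 'f) scwol \<Rightarrow> ('v \<Rightarrow> 'w) \<Rightarrow> ('e \<Rightarrow> 'f) \<Rightarrow> bool" where
  "scwol_iso X Y fv fe \<longleftrightarrow> scwol_morph X Y fv fe \<and>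
     (\<exists>gv ge. scwol_morph Y X gv ge \<and>
        (\<forall>x\<in>sVert X. gv (fv x) = x) \<and> (\<forall>y\<in>sVert Y. fv (gv y) = y) \<and>
        (\<forall>a\<in>sEdge X. ge (fe a) = a) \<and> (\<forall>b\<in>sEdge Y. fe (ge b) = b))"

subsection \<open>Connectivity and simple connectivity (combinatorial, via edge paths
  in the geometric realization: 1-cells = edges, 2-cells = composable pairs)\<close>

text \<open>An edge path is a list of edges with orientation; True = traversed from
  initial to terminal vertex.\<close>
fun epath :: "('v, 'e) scwol \<Rightarrow> 'v \<Rightarrow> ('e \<times> bool) list \<Rightarrow> 'v \<Rightarrow> bool" where
  "epath X v [] w \<longleftrightarrow> v \<in> sVert X \<and> v = w"
| "epath X v ((e, d) # p) w \<longleftrightarrow> e \<in> sEdge X \<and>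
     v = (if d then sIni X e else sTer X e) \<and>
     epath X (if d then sTer X e else sIni X e) p w"

definition scwol_connected :: "('v, 'e) scwol \<Rightarrow> bool" where
  "scwol_connected X \<longleftrightarrow> sVert X \<noteq> {} \<and>
     (\<forall>v\<in>sVert X. \<forall>w\<in>sVert X. \<exists>p. epath X v p w)"

text \<open>Elementary homotopies of edge paths: cancelling a backtrack, and
  replacing the two sides b, a of the 2-simplex (a,b) by its third side ab.\<close>
inductive ehstep :: "('v, 'e) scwol \<Rightarrow> ('e \<times> bool) list \<Rightarrow> ('e \<times> bool) list \<Rightarrow> bool"
  for X where
  backtrack: "e \<in> sEdge X \<Longrightarrow> ehstep X (u @ [(e, d), (e, \<not> d)] @ w) (u @ w)"
| triangle: "composable X a b \<Longrightarrow>
     ehstep X (u @ [(b, True), (a, True)] @ w) (u @ [(sComp X a b, True)] @ w)"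

definition ehrel :: "('v, 'e) scwol \<Rightarrow> 'v \<Rightarrow> 'v \<Rightarrow> ('e \<times> bool) list \<Rightarrow> ('e \<times> bool) list \<Rightarrow> bool" where
  "ehrel X v w p q \<longleftrightarrow> epath X v p w \<and> epath X v q w \<and> (ehstep X p q \<or> ehstep X q p)"

definition scwol_simply_connected :: "('v, 'e) scwol \<Rightarrow> bool" where
  "scwol_simply_connected X \<longleftrightarrow> scwol_connected X \<and>
     (\<forall>v\<in>sVert X. \<forall>p. epath X v p v \<longrightarrow> (ehrel X v v)\<^sup>*\<^sup>* p [])"

definition scwol_action ::
  "'g monoid \<Rightarrow> ('v, 'e) scwol \<Rightarrow> ('g \<Rightarrow> 'v \<Rightarrow> 'v) \<Rightarrow> ('g \<Rightarrow> 'e \<Rightarrow> 'e) \<Rightarrow> bool" where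
  "scwol_action G X av ae \<longleftrightarrow> group G \<and> is_scwol X \<and>
     (\<forall>g\<in>carrier G. scwol_iso X X (av g) (ae g)) \<and>
     (\<forall>v\<in>sVert X. av \<one>\<^bsub>G\<^esub> v = v) \<and> (\<forall>a\<in>sEdge X. ae \<one>\<^bsub>G\<^esub> a = a) \<and>
     (\<forall>g\<in>carrier G. \<forall>h\<in>carrier G.
        (\<forall>v\<in>sVert X. av (g \<otimes>\<^bsub>G\<^esub> h) v = av g (av h v)) \<and>
        (\<forall>a\<in>sEdge X. ae (g \<otimes>\<^bsub>G\<^esub> h) a = ae g (ae h a))) \<and>
     (\<forall>g\<in>carrier G. \<forall>a\<in>sEdge X. av g (sIni X a) \<noteq> sTer X a) \<and>
     (\<forall>g\<in>carrier G. \<forall>a\<in>sEdge X. av g (sIni X a) = sIni X a \<longrightarrow> ae g a = a)"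

definition orbit :: "'g monoid \<Rightarrow> ('g \<Rightarrow> 'x \<Rightarrow> 'x) \<Rightarrow> 'x \<Rightarrow> 'x set" where
  "orbit G act x = {act g x | g. g \<in> carrier G}"

definition quotient_scwol ::
  "'g monoid \<Rightarrow> ('v, 'e) scwol \<Rightarrow> ('g \<Rightarrow> 'v \<Rightarrow> 'v) \<Rightarrow> ('g \<Rightarrow> 'e \<Rightarrow> 'e) \<Rightarrow> ('v set, 'e set) scwol" where
  "quotient_scwol G X av ae =
     \<lparr> sVert = orbit G av ` sVert X,
       sEdge = orbit G ae ` sEdge X,
       sIni = (\<lambda>A. sIni X ` A),
       sTer = (\<lambda>A. sTer X ` A),
       sComp = (\<lambda>A B. {sComp X a b | a b. a \<in> A \<and> b \<in> B \<and> sIni X a = sTer X b}) \<rparr>"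

definition equivariant_morph ::
  "'g monoid \<Rightarrow> ('v, 'e) scwol \<Rightarrow> ('g \<Rightarrow> 'v \<Rightarrow> 'v) \<Rightarrow> ('g \<Rightarrow> 'e \<Rightarrow> 'e) \<Rightarrow>
   'h monoid \<Rightarrow> ('w, 'f) scwol \<Rightarrow> ('h \<Rightarrow> 'w \<Rightarrow> 'w) \<Rightarrow> ('h \<Rightarrow> 'f \<Rightarrow> 'f) \<Rightarrow>
   ('g \<Rightarrow> 'h) \<Rightarrow> ('v \<Rightarrow> 'w) \<Rightarrow> ('e \<Rightarrow> 'f) \<Rightarrow> bool" where
  "equivariant_morph G X av ae G' X' av' ae' \<Lambda> Lv Le \<longleftrightarrow>
     scwol_morph X X' Lv Le \<and> \<Lambda> \<in> hom G G' \<and>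
     (\<forall>g\<in>carrier G. (\<forall>v\<in>sVert X. Lv (av g v) = av' (\<Lambda> g) (Lv v)) \<and>
                    (\<forall>a\<in>sEdge X. Le (ae g a) = ae' (\<Lambda> g) (Le a)))"

definition induced_map :: "'h monoid \<Rightarrow> ('h \<Rightarrow> 'y \<Rightarrow> 'y) \<Rightarrow> ('x \<Rightarrow> 'y) \<Rightarrow> 'x set \<Rightarrow> 'y set" where
  "induced_map G' act' L A = {act' g (L x) | g x. g \<in> carrier G' \<and> x \<in> A}"

definition complex_of_groups ::
  "('v, 'e) scwol \<Rightarrow> ('v \<Rightarrow> 'g monoid) \<Rightarrow> ('e \<Rightarrow> 'g \<Rightarrow> 'g) \<Rightarrow> ('e \<Rightarrow> 'e \<Rightarrow> 'g) \<Rightarrow> bool" where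
  "complex_of_groups Y Gs psi gab \<longleftrightarrow> is_scwol Y \<and>
     (\<forall>\<sigma>\<in>sVert Y. group (Gs \<sigma>)) \<and>
     (\<forall>a\<in>sEdge Y. psi a \<in> hom (Gs (sIni Y a)) (Gs (sTer Y a)) \<and>
                  inj_on (psi a) (carrier (Gs (sIni Y a)))) \<and>
     (\<forall>a b. composable Y a b \<longrightarrow>
        gab a b \<in> carrier (Gs (sTer Y a)) \<and>
        (\<forall>g\<in>carrier (Gs (sIni Y b)).
           gab a b \<otimes>\<^bsub>Gs (sTer Y a)\<^esub> psi (sComp Y a b) g \<otimes>\<^bsub>Gs (sTer Y a)\<^esub> inv\<^bsub>Gs (sTer Y a)\<^esub> (gab a b)
           = psi a (psi b g))) \<and>
     (\<forall>a b c. composable Y a b \<and> composable Y b c \<longrightarrow>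
        psi a (gab b c) \<otimes>\<^bsub>Gs (sTer Y a)\<^esub> gab a (sComp Y b c)
        = gab a b \<otimes>\<^bsub>Gs (sTer Y a)\<^esub> gab (sComp Y a b) c)"

definition cog_morph ::
  "('v, 'e) scwol \<Rightarrow> ('v \<Rightarrow> 'g monoid) \<Rightarrow> ('e \<Rightarrow> 'g \<Rightarrow> 'g) \<Rightarrow> ('e \<Rightarrow> 'e \<Rightarrow> 'g) \<Rightarrow>
   ('w, 'f) scwol \<Rightarrow> ('w \<Rightarrow> 'h monoid) \<Rightarrow> ('f \<Rightarrow> 'h \<Rightarrow> 'h) \<Rightarrow> ('f \<Rightarrow> 'f \<Rightarrow> 'h) \<Rightarrow>
   ('v \<Rightarrow> 'w) \<Rightarrow> ('e \<Rightarrow> 'f) \<Rightarrow> ('v \<Rightarrow> 'g \<Rightarrow> 'h) \<Rightarrow> ('e \<Rightarrow> 'h) \<Rightarrow> bool" where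
  "cog_morph Y Gs psi gab Y' Gs' psi' gab' lv led phv phe \<longleftrightarrow>
     complex_of_groups Y Gs psi gab \<and> complex_of_groups Y' Gs' psi' gab' \<and>
     scwol_morph Y Y' lv led \<and>
     (\<forall>\<sigma>\<in>sVert Y. phv \<sigma> \<in> hom (Gs \<sigma>) (Gs' (lv \<sigma>))) \<and>
     (\<forall>a\<in>sEdge Y. phe a \<in> carrier (Gs' (lv (sTer Y a))) \<and>
        (\<forall>g\<in>carrier (Gs (sIni Y a)).
           phe a \<otimes>\<^bsub>Gs' (lv (sTer Y a))\<^esub> psi' (led a) (phv (sIni Y a) g)
             \<otimes>\<^bsub>Gs' (lv (sTer Y a))\<^esub> inv\<^bsub>Gs' (lv (sTer Y a))\<^esub> (phe a)
           = phv (sTer Y a) (psi a g))) \<and>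
     (\<forall>a b. composable Y a b \<longrightarrow>
        phv (sTer Y a) (gab a b) \<otimes>\<^bsub>Gs' (lv (sTer Y a))\<^esub> phe (sComp Y a b)
        = phe a \<otimes>\<^bsub>Gs' (lv (sTer Y a))\<^esub> psi' (led a) (phe b)
            \<otimes>\<^bsub>Gs' (lv (sTer Y a))\<^esub> gab' (led a) (led b))"

text \<open>The map from the disjoint union of the coset spaces
  \<open>G_\<sigma>/\<psi>_a(G_{i(a)})\<close> (pairs (a, coset)) to \<open>G'_{l(\<sigma>)}/\<psi>'_{a'}(G'_{i(a')})\<close>
  induced by \<open>g \<mapsto> \<phi>_\<sigma>(g)\<phi>(a)\<close> sends the pair (a, C) to the set
  \<open>\<phi>_\<sigma>(C) \<phi>(a) \<psi>'_{a'}(G'_{i(a')})\<close>.\<close>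
definition cog_covering ::
  "('v, 'e) scwol \<Rightarrow> ('v \<Rightarrow> 'g monoid) \<Rightarrow> ('e \<Rightarrow> 'g \<Rightarrow> 'g) \<Rightarrow> ('e \<Rightarrow> 'e \<Rightarrow> 'g) \<Rightarrow>
   ('w, 'f) scwol \<Rightarrow> ('w \<Rightarrow> 'h monoid) \<Rightarrow> ('f \<Rightarrow> 'h \<Rightarrow> 'h) \<Rightarrow> ('f \<Rightarrow> 'f \<Rightarrow> 'h) \<Rightarrow>
   ('v \<Rightarrow> 'w) \<Rightarrow> ('e \<Rightarrow> 'f) \<Rightarrow> ('v \<Rightarrow> 'g \<Rightarrow> 'h) \<Rightarrow> ('e \<Rightarrow> 'h) \<Rightarrow> bool" where
  "cog_covering Y Gs psi gab Y' Gs' psi' gab' lv led phv phe \<longleftrightarrow>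
     cog_morph Y Gs psi gab Y' Gs' psi' gab' lv led phv phe \<and>
     scwol_nondeg Y Y' lv led \<and> scwol_connected Y' \<and>
     (\<forall>\<sigma>\<in>sVert Y. inj_on (phv \<sigma>) (carrier (Gs \<sigma>))) \<and>
     (\<forall>a'\<in>sEdge Y'. \<forall>\<sigma>\<in>sVert Y. sTer Y' a' = lv \<sigma> \<longrightarrow>
        bij_betw
          (\<lambda>(a, C). (phv \<sigma> ` C) <#>\<^bsub>Gs' (lv \<sigma>)\<^esub> {phe a}
                     <#>\<^bsub>Gs' (lv \<sigma>)\<^esub> (psi' a' ` carrier (Gs' (sIni Y' a'))))
          {(a, C). a \<in> sEdge Y \<and> led a = a' \<and> sTer Y a = \<sigma> \<and>
                   C \<in> lcosets\<^bsub>Gs \<sigma>\<^esub> (psi a ` carrier (Gs (sIni Y a)))}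
          (lcosets\<^bsub>Gs' (lv \<sigma>)\<^esub> (psi' a' ` carrier (Gs' (sIni Y' a')))))"

text \<open>The unique lift of an edge \<open>a\<close> of the quotient with initial vertex \<open>bar (i(a))\<close>.\<close>
definition lift_edge :: "('v, 'e) scwol \<Rightarrow> ('v set \<Rightarrow> 'v) \<Rightarrow> 'e set \<Rightarrow> 'e" where
  "lift_edge X bar a = (THE x. x \<in> a \<and> sIni X x = bar (sIni X ` a))"

definition valid_choice ::
  "'g monoid \<Rightarrow> ('v, 'e) scwol \<Rightarrow> ('g \<Rightarrow> 'v \<Rightarrow> 'v) \<Rightarrow> ('g \<Rightarrow> 'e \<Rightarrow> 'e) \<Rightarrow>
   ('v set \<Rightarrow> 'v) \<Rightarrow> ('e set \<Rightarrow> 'g) \<Rightarrow> bool" where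
  "valid_choice G X av ae bar h \<longleftrightarrow>
     (let Y = quotient_scwol G X av ae in
       (\<forall>\<sigma>\<in>sVert Y. bar \<sigma> \<in> \<sigma>) \<and>
       (\<forall>a\<in>sEdge Y. h a \<in> carrier G \<and>
          av (h a) (sTer X (lift_edge X bar a)) = bar (sTer Y a)))"

definition stab :: "'g monoid \<Rightarrow> ('g \<Rightarrow> 'v \<Rightarrow> 'v) \<Rightarrow> 'v \<Rightarrow> 'g set" where
  "stab G av x = {g \<in> carrier G. av g x = x}"

definition assoc_groups :: "'g monoid \<Rightarrow> ('g \<Rightarrow> 'v \<Rightarrow> 'v) \<Rightarrow> ('v set \<Rightarrow> 'v) \<Rightarrow> 'v set \<Rightarrow> 'g monoid" where
  "assoc_groups G av bar \<sigma> = G\<lparr>carrier := stab G av (bar \<sigma>)\<rparr>"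

definition assoc_psi :: "'g monoid \<Rightarrow> ('e set \<Rightarrow> 'g) \<Rightarrow> 'e set \<Rightarrow> 'g \<Rightarrow> 'g" where
  "assoc_psi G h a g = h a \<otimes>\<^bsub>G\<^esub> g \<otimes>\<^bsub>G\<^esub> inv\<^bsub>G\<^esub> (h a)"

definition assoc_twist ::
  "'g monoid \<Rightarrow> ('v, 'e) scwol \<Rightarrow> ('g \<Rightarrow> 'v \<Rightarrow> 'v) \<Rightarrow> ('g \<Rightarrow> 'e \<Rightarrow> 'e) \<Rightarrow> ('e set \<Rightarrow> 'g) \<Rightarrow>
   'e set \<Rightarrow> 'e set \<Rightarrow> 'g" where
  "assoc_twist G X av ae h a b =
     h a \<otimes>\<^bsub>G\<^esub> h b \<otimes>\<^bsub>G\<^esub> inv\<^bsub>G\<^esub> (h (sComp (quotient_scwol G X av ae) a b))"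

definition induced_cog_v :: "'h monoid \<Rightarrow> ('g \<Rightarrow> 'h) \<Rightarrow> ('v set \<Rightarrow> 'h) \<Rightarrow> 'v set \<Rightarrow> 'g \<Rightarrow> 'h" where
  "induced_cog_v G' \<Lambda> k \<sigma> g = k \<sigma> \<otimes>\<^bsub>G'\<^esub> \<Lambda> g \<otimes>\<^bsub>G'\<^esub> inv\<^bsub>G'\<^esub> (k \<sigma>)"

definition induced_cog_e ::
  "'h monoid \<Rightarrow> ('v, 'e) scwol \<Rightarrow> ('g \<Rightarrow> 'h) \<Rightarrow> ('e set \<Rightarrow> 'g) \<Rightarrow> ('f set \<Rightarrow> 'h) \<Rightarrow>
   ('e set \<Rightarrow> 'f set) \<Rightarrow> ('v set \<Rightarrow> 'h) \<Rightarrow> 'e set \<Rightarrow> 'h" where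
  "induced_cog_e G' X \<Lambda> h h' led k a =
     k (sTer X ` a) \<otimes>\<^bsub>G'\<^esub> \<Lambda> (h a) \<otimes>\<^bsub>G'\<^esub> inv\<^bsub>G'\<^esub> (k (sIni X ` a)) \<otimes>\<^bsub>G'\<^esub> inv\<^bsub>G'\<^esub> (h' (led a))"

end

(*
  A choice of lifts identifies, for an edge a of the quotient Y of X by G, the cosets of
  psi_a(G_i(a)) in G_t(a) with the lifts of a ending at the chosen vertex over t(a). Under
  this identification the covering condition for the induced morphism lambda at a vertex
  sigma and an edge a' says that L maps the edges of X ending at bar(sigma) and lying over
  a' bijectively onto the edges of X' ending at L(bar(sigma)) and lying over a'; likewise
  nondegeneracy of the quotient morphism says that L is bijective on the edges starting at
  each vertex. By equivariance, lambda is therefore a covering iff every lambda_sigma is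
  injective and L is bijective on the stars of all vertices. A morphism that is bijective
  on stars from a connected scwol to a simply connected one is an isomorphism, since edge
  paths and their elementary homotopies lift uniquely. Finally, if L is injective on
  vertices then the kernel of Lambda fixes every vertex, so it lies in each G_sigma, on which
  lambda_sigma = k_sigma Lambda(-) k_sigma^-1 is injective.
*)
theory Submission
  imports Defs
begin

lemma bij_betw_iff_conjugate:
  assumes "bij_betw f A B" "bij_betw f' A' B'" "g ` A \<subseteq> A'" "\<And>a. a \<in> A \<Longrightarrow> F (f a) = f' (g a)"
  shows "bij_betw F B B' \<longleftrightarrow> bij_betw g A A'"
proof -
  have "bij_betw F B B' \<longleftrightarrow> bij_betw (F \<circ> f) A B'" using bij_betw_comp_iff [OF assms(1)] .
  also have "\<dots> \<longleftrightarrow> bij_betw (f' \<circ> g) A B'" using assms(4) by (intro bij_betw_cong) auto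
  also have "\<dots> \<longleftrightarrow> bij_betw g A A'" using bij_betw_comp_iff2 [OF assms(2,3)] by simp
  finally show ?thesis .
qed

lemma bij_betw_iff_fibres:
  assumes "\<And>a. a \<in> A \<Longrightarrow> q (f a) = p a" "p ` A \<subseteq> C" "q ` B \<subseteq> C"
  shows "bij_betw f A B \<longleftrightarrow> (\<forall>c\<in>C. bij_betw f {a \<in> A. p a = c} {b \<in> B. q b = c})"
proof
  assume "bij_betw f A B"
  then show "\<forall>c\<in>C. bij_betw f {a \<in> A. p a = c} {b \<in> B. q b = c}"
    using assms(1) by (auto simp: bij_betw_def inj_on_def image_iff)
next
  assume fib: "\<forall>c\<in>C. bij_betw f {a \<in> A. p a = c} {b \<in> B. q b = c}"
  show "bij_betw f A B"
  proof (rule bij_betw_imageI)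
    show "inj_on f A"
    proof (rule inj_onI)
      fix a a' assume a: "a \<in> A" "a' \<in> A" "f a = f a'"
      then have "p a = p a'" using assms(1) by metis
      moreover have "inj_on f {x \<in> A. p x = p a}"
        using fib assms(2) a(1) by (auto simp: bij_betw_def)
      ultimately show "a = a'" using a by (auto dest: inj_onD)
    qed
    show "f ` A = B"
    proof (intro equalityI subsetI)
      fix b assume "b \<in> B"
      then have "b \<in> f ` {a \<in> A. p a = q b}"
        using fib assms(3) by (auto simp: bij_betw_def)
      then show "b \<in> f ` A" by blast
    next
      fix b assume "b \<in> f ` A"
      then obtain a where "a \<in> A" "b = f a" by blast
      then show "b \<in> B" using fib assms(1,2) by (force simp: bij_betw_def)
    qed
  qed
qed

lemma bij_betw_fibre:
  assumes f: "bij_betw f A B" and g: "inj_on g V"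
    and p: "\<And>a. a \<in> A \<Longrightarrow> p a \<in> V" and q: "\<And>a. a \<in> A \<Longrightarrow> q (f a) = g (p a)" and x: "x \<in> V"
  shows "bij_betw f {a \<in> A. p a = x} {b \<in> B. q b = g x}"
proof (rule bij_betw_imageI)
  show "inj_on f {a \<in> A. p a = x}"
    using f by (auto simp: bij_betw_def intro: inj_on_subset)
  show "f ` {a \<in> A. p a = x} = {b \<in> B. q b = g x}"
  proof (intro equalityI subsetI)
    fix b assume "b \<in> {b \<in> B. q b = g x}"
    then obtain a where a: "a \<in> A" "b = f a" "q b = g x"
      using f by (auto simp: bij_betw_def)
    then have "p a = x" using g p q x by (metis inj_onD)
    then show "b \<in> f ` {a \<in> A. p a = x}" using a by blast
  qed (use f q in \<open>auto simp: bij_betw_def\<close>)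
qed

section \<open>Scwols and their morphisms\<close>

locale wf_scwol =
  fixes X :: "('v, 'e) scwol"
  assumes is_scwol: "is_scwol X"
begin

lemma sIni_closed: "a \<in> sEdge X \<Longrightarrow> sIni X a \<in> sVert X"
  using is_scwol by (simp add: is_scwol_def)

lemma sTer_closed: "a \<in> sEdge X \<Longrightarrow> sTer X a \<in> sVert X"
  using is_scwol by (simp add: is_scwol_def)

lemma sComp_closed: "composable X a b \<Longrightarrow> sComp X a b \<in> sEdge X"
  using is_scwol by (simp add: is_scwol_def)

lemma sIni_sComp: "composable X a b \<Longrightarrow> sIni X (sComp X a b) = sIni X b"
  using is_scwol by (simp add: is_scwol_def)

lemma sTer_sComp: "composable X a b \<Longrightarrow> sTer X (sComp X a b) = sTer X a"
  using is_scwol by (simp add: is_scwol_def)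

lemma sComp_assoc:
  "composable X a b \<Longrightarrow> composable X b c \<Longrightarrow> sComp X (sComp X a b) c = sComp X a (sComp X b c)"
  using is_scwol by (simp add: is_scwol_def)

lemma epath_start_closed: "epath X v p w \<Longrightarrow> v \<in> sVert X"
  by (cases p) (auto simp: sIni_closed sTer_closed)

lemma epath_end_closed: "epath X v p w \<Longrightarrow> w \<in> sVert X"
  by (induction p arbitrary: v) auto

lemma epath_append_iff: "epath X v (p @ q) w \<longleftrightarrow> (\<exists>u. epath X v p u \<and> epath X u q w)"
proof (induction p arbitrary: v)
  case Nil
  then show ?case using epath_start_closed by fastforce
next
  case (Cons x p)
  then show ?case by (cases x) auto
qed

end

locale wf_scwol_morph = X: wf_scwol X + X': wf_scwol X'
  for X :: "('v, 'e) scwol" and X' :: "('w, 'f) scwol" +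
  fixes Lv :: "'v \<Rightarrow> 'w" and Le :: "'e \<Rightarrow> 'f"
  assumes morph: "scwol_morph X X' Lv Le"
begin

lemma Lv_closed: "v \<in> sVert X \<Longrightarrow> Lv v \<in> sVert X'"
  using morph by (auto simp: scwol_morph_def)

lemma Le_closed: "a \<in> sEdge X \<Longrightarrow> Le a \<in> sEdge X'"
  using morph by (auto simp: scwol_morph_def)

lemma sIni_Le: "a \<in> sEdge X \<Longrightarrow> sIni X' (Le a) = Lv (sIni X a)"
  using morph by (auto simp: scwol_morph_def)

lemma sTer_Le: "a \<in> sEdge X \<Longrightarrow> sTer X' (Le a) = Lv (sTer X a)"
  using morph by (auto simp: scwol_morph_def)

lemma Le_sComp: "composable X a b \<Longrightarrow> Le (sComp X a b) = sComp X' (Le a) (Le b)"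
  using morph by (auto simp: scwol_morph_def)

lemma composable_Le: "composable X a b \<Longrightarrow> composable X' (Le a) (Le b)"
  by (auto simp: composable_def Le_closed sIni_Le sTer_Le)

end

lemma scwol_iso_bij:
  assumes "scwol_iso X X' Lv Le"
  shows "bij_betw Lv (sVert X) (sVert X')" "bij_betw Le (sEdge X) (sEdge X')"
proof -
  obtain gv ge where g: "scwol_morph X' X gv ge"
    "\<forall>x\<in>sVert X. gv (Lv x) = x" "\<forall>y\<in>sVert X'. Lv (gv y) = y"
    "\<forall>a\<in>sEdge X. ge (Le a) = a" "\<forall>b\<in>sEdge X'. Le (ge b) = b"
    and f: "scwol_morph X X' Lv Le"
    using assms by (auto simp: scwol_iso_def)
  show "bij_betw Lv (sVert X) (sVert X')"
    by (rule bij_betw_byWitness[of _ gv]) (use f g in \<open>auto simp: scwol_morph_def\<close>)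
  show "bij_betw Le (sEdge X) (sEdge X')"
    by (rule bij_betw_byWitness[of _ ge]) (use f g in \<open>auto simp: scwol_morph_def\<close>)
qed

context wf_scwol_morph
begin

lemma scwol_iso_if_bij_betw:
  assumes bv: "bij_betw Lv (sVert X) (sVert X')" and be: "bij_betw Le (sEdge X) (sEdge X')"
  shows "scwol_iso X X' Lv Le"
proof -
  define gv where "gv = inv_into (sVert X) Lv"
  define ge where "ge = inv_into (sEdge X) Le"
  have gv: "\<And>x. x \<in> sVert X \<Longrightarrow> gv (Lv x) = x" "\<And>y. y \<in> sVert X' \<Longrightarrow> Lv (gv y) = y"
    "\<And>y. y \<in> sVert X' \<Longrightarrow> gv y \<in> sVert X"
    using bv by (auto simp: gv_def bij_betw_def f_inv_into_f inv_into_into)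
  have ge: "\<And>a. a \<in> sEdge X \<Longrightarrow> ge (Le a) = a" "\<And>b. b \<in> sEdge X' \<Longrightarrow> Le (ge b) = b"
    "\<And>b. b \<in> sEdge X' \<Longrightarrow> ge b \<in> sEdge X"
    using be by (auto simp: ge_def bij_betw_def f_inv_into_f inv_into_into)
  have ini: "sIni X (ge b) = gv (sIni X' b)" and ter: "sTer X (ge b) = gv (sTer X' b)"
    if "b \<in> sEdge X'" for b
    using that ge gv(1) sIni_Le sTer_Le X.sIni_closed X.sTer_closed by metis+
  have "ge (sComp X' a b) = sComp X (ge a) (ge b)" if ab: "composable X' a b" for a b
  proof -
    have "composable X (ge a) (ge b)"
      using ab ge(3) ini ter by (simp add: composable_def)
    then show ?thesis
      using ab ge Le_sComp X.sComp_closed by (metis composable_def)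
  qed
  then have "scwol_morph X' X gv ge"
    unfolding scwol_morph_def using gv(3) ge(3) ini ter by blast
  then show ?thesis
    unfolding scwol_iso_def using morph gv ge by blast
qed

lemma star_bij_if_scwol_iso:
  assumes iso: "scwol_iso X X' Lv Le" and x: "x \<in> sVert X"
  shows "bij_betw Le {a \<in> sEdge X. sIni X a = x} {a \<in> sEdge X'. sIni X' a = Lv x}"
    and "bij_betw Le {a \<in> sEdge X. sTer X a = x} {a \<in> sEdge X'. sTer X' a = Lv x}"
proof -
  have Lv: "inj_on Lv (sVert X)" and Le: "bij_betw Le (sEdge X) (sEdge X')"
    using scwol_iso_bij [OF iso] by (auto simp: bij_betw_def)
  show "bij_betw Le {a \<in> sEdge X. sIni X a = x} {a \<in> sEdge X'. sIni X' a = Lv x}"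
    by (rule bij_betw_fibre [OF Le Lv]) (simp_all add: X.sIni_closed sIni_Le x)
  show "bij_betw Le {a \<in> sEdge X. sTer X a = x} {a \<in> sEdge X'. sTer X' a = Lv x}"
    by (rule bij_betw_fibre [OF Le Lv]) (simp_all add: X.sTer_closed sTer_Le x)
qed

end

section \<open>Morphisms bijective on stars\<close>

locale star_bijective_morph = wf_scwol_morph X X' Lv Le
  for X :: "('v, 'e) scwol" and X' :: "('w, 'f) scwol" and Lv Le +
  assumes out_star_bij:
      "x \<in> sVert X \<Longrightarrow> bij_betw Le {a \<in> sEdge X. sIni X a = x} {a \<in> sEdge X'. sIni X' a = Lv x}"
    and in_star_bij:
      "x \<in> sVert X \<Longrightarrow> bij_betw Le {a \<in> sEdge X. sTer X a = x} {a \<in> sEdge X'. sTer X' a = Lv x}"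
begin

lemma Le_inj_on_out_star: "a \<in> sEdge X \<Longrightarrow> b \<in> sEdge X \<Longrightarrow> sIni X a = sIni X b \<Longrightarrow> Le a = Le b \<Longrightarrow> a = b"
  using out_star_bij [OF X.sIni_closed, of a] by (auto simp: bij_betw_def dest: inj_onD)

lemma Le_inj_on_in_star: "a \<in> sEdge X \<Longrightarrow> b \<in> sEdge X \<Longrightarrow> sTer X a = sTer X b \<Longrightarrow> Le a = Le b \<Longrightarrow> a = b"
  using in_star_bij [OF X.sTer_closed, of a] by (auto simp: bij_betw_def dest: inj_onD)

lemma out_star_lift:
  assumes "x \<in> sVert X" "b \<in> sEdge X'" "sIni X' b = Lv x"
  obtains a where "a \<in> sEdge X" "sIni X a = x" "Le a = b"
proof -
  have "b \<in> Le ` {a \<in> sEdge X. sIni X a = x}"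
    using out_star_bij [OF assms(1)] assms(2,3) by (simp add: bij_betw_def)
  then show ?thesis using that by blast
qed

lemma in_star_lift:
  assumes "x \<in> sVert X" "b \<in> sEdge X'" "sTer X' b = Lv x"
  obtains a where "a \<in> sEdge X" "sTer X a = x" "Le a = b"
proof -
  have "b \<in> Le ` {a \<in> sEdge X. sTer X a = x}"
    using in_star_bij [OF assms(1)] assms(2,3) by (simp add: bij_betw_def)
  then show ?thesis using that by blast
qed

definition map_epath :: "('e \<times> bool) list \<Rightarrow> ('f \<times> bool) list" where
  "map_epath q = map (\<lambda>(a, d). (Le a, d)) q"

definition path_lifts :: "'v \<Rightarrow> ('f \<times> bool) list \<Rightarrow> 'v \<Rightarrow> bool" where
  "path_lifts y p w \<longleftrightarrow> (\<exists>q. epath X y q w \<and> map_epath q = p)"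

lemma epath_map_epath: "epath X y q w \<Longrightarrow> epath X' (Lv y) (map_epath q) (Lv w)"
proof (induction q arbitrary: y)
  case Nil
  then show ?case by (auto simp: map_epath_def Lv_closed)
next
  case (Cons x q)
  then show ?case by (cases x) (auto simp: map_epath_def Le_closed sIni_Le sTer_Le)
qed

lemma path_lifts_Nil: "path_lifts y [] w \<longleftrightarrow> y \<in> sVert X \<and> y = w"
  by (simp add: path_lifts_def map_epath_def)

lemma path_lifts_Cons:
  "path_lifts y ((b, d) # p) w \<longleftrightarrow>
    (\<exists>a. a \<in> sEdge X \<and> Le a = b \<and> y = (if d then sIni X a else sTer X a) \<and>
      path_lifts (if d then sTer X a else sIni X a) p w)"
proof
  assume "path_lifts y ((b, d) # p) w"
  then obtain x q where q: "epath X y (x # q) w" "map_epath (x # q) = (b, d) # p"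
    by (auto simp: path_lifts_def map_epath_def Cons_eq_map_conv)
  obtain a where a: "x = (a, d)" "Le a = b"
    using q(2) by (cases x) (simp add: map_epath_def)
  have "a \<in> sEdge X" "y = (if d then sIni X a else sTer X a)"
    "epath X (if d then sTer X a else sIni X a) q w" "map_epath q = p"
    using q a(1) by (simp_all add: map_epath_def)
  then show "\<exists>a. a \<in> sEdge X \<and> Le a = b \<and> y = (if d then sIni X a else sTer X a) \<and>
      path_lifts (if d then sTer X a else sIni X a) p w"
    unfolding path_lifts_def using a(2) by blast
next
  assume "\<exists>a. a \<in> sEdge X \<and> Le a = b \<and> y = (if d then sIni X a else sTer X a) \<and>
      path_lifts (if d then sTer X a else sIni X a) p w"
  then obtain a q where "a \<in> sEdge X" "Le a = b" "y = (if d then sIni X a else sTer X a)"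
      "epath X (if d then sTer X a else sIni X a) q w" "map_epath q = p"
    by (auto simp: path_lifts_def)
  then show "path_lifts y ((b, d) # p) w"
    unfolding path_lifts_def by (intro exI [of _ "(a, d) # q"]) (simp add: map_epath_def)
qed

lemma path_lift_exists:
  "y \<in> sVert X \<Longrightarrow> epath X' (Lv y) p w' \<Longrightarrow> \<exists>w. path_lifts y p w \<and> Lv w = w'"
proof (induction p arbitrary: y)
  case Nil
  then show ?case by (auto simp: path_lifts_def map_epath_def intro!: exI [of _ "[]"])
next
  case (Cons x p)
  obtain b d where x: "x = (b, d)" by (cases x)
  have b: "b \<in> sEdge X'" "(if d then sIni X' b else sTer X' b) = Lv y"
    and p: "epath X' (if d then sTer X' b else sIni X' b) p w'"
    using Cons.prems(2) x by (auto split: if_splits)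
  obtain a where a: "a \<in> sEdge X" "Le a = b" "y = (if d then sIni X a else sTer X a)"
  proof (cases d)
    case True
    then have "sIni X' b = Lv y" using b(2) by simp
    then obtain a where "a \<in> sEdge X" "sIni X a = y" "Le a = b"
      using out_star_lift [OF Cons.prems(1) b(1)] by blast
    then show ?thesis using True that by simp
  next
    case False
    then have "sTer X' b = Lv y" using b(2) by simp
    then obtain a where "a \<in> sEdge X" "sTer X a = y" "Le a = b"
      using in_star_lift [OF Cons.prems(1) b(1)] by blast
    then show ?thesis using False that by simp
  qed
  then have "epath X' (Lv (if d then sTer X a else sIni X a)) p w'"
    using p a(1) a(2) [symmetric] by (cases d) (simp_all add: sIni_Le sTer_Le)
  then obtain w where "path_lifts (if d then sTer X a else sIni X a) p w" "Lv w = w'"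
    using Cons.IH a(1) X.sIni_closed X.sTer_closed by (cases d) auto
  then show ?case
    using a x path_lifts_Cons by blast
qed

lemma path_lifts_unique: "path_lifts y p w1 \<Longrightarrow> path_lifts y p w2 \<Longrightarrow> w1 = w2"
proof (induction p arbitrary: y)
  case Nil
  then show ?case by (simp add: path_lifts_def map_epath_def)
next
  case (Cons x p)
  obtain b d where x: "x = (b, d)" by (cases x)
  obtain a1 where a1: "a1 \<in> sEdge X" "Le a1 = b" "y = (if d then sIni X a1 else sTer X a1)"
    "path_lifts (if d then sTer X a1 else sIni X a1) p w1"
    using Cons.prems(1) x path_lifts_Cons by blast
  obtain a2 where a2: "a2 \<in> sEdge X" "Le a2 = b" "y = (if d then sIni X a2 else sTer X a2)"
    "path_lifts (if d then sTer X a2 else sIni X a2) p w2"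
    using Cons.prems(2) x path_lifts_Cons by blast
  have "a1 = a2"
    using a1 a2 by (cases d) (auto intro: Le_inj_on_out_star Le_inj_on_in_star)
  then show ?case
    using Cons.IH a1(4) a2(4) by blast
qed

lemma path_lifts_append: "path_lifts y (p1 @ p2) w \<longleftrightarrow> (\<exists>z. path_lifts y p1 z \<and> path_lifts z p2 w)"
proof
  assume "path_lifts y (p1 @ p2) w"
  then obtain q where q: "epath X y q w" "map_epath q = p1 @ p2" by (auto simp: path_lifts_def)
  then obtain q1 q2 where "q = q1 @ q2" "map_epath q1 = p1" "map_epath q2 = p2"
    by (auto simp: map_epath_def map_eq_append_conv)
  then show "\<exists>z. path_lifts y p1 z \<and> path_lifts z p2 w"
    using q X.epath_append_iff by (auto simp: path_lifts_def)
next
  assume "\<exists>z. path_lifts y p1 z \<and> path_lifts z p2 w"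
  then obtain z q1 q2 where "epath X y q1 z" "map_epath q1 = p1" "epath X z q2 w" "map_epath q2 = p2"
    by (auto simp: path_lifts_def)
  then show "path_lifts y (p1 @ p2) w"
    unfolding path_lifts_def using X.epath_append_iff
    by (auto simp: map_epath_def intro!: exI [of _ "q1 @ q2"])
qed

lemma path_lifts_single:
  "path_lifts y [(b, d)] w \<longleftrightarrow> (\<exists>a. a \<in> sEdge X \<and> Le a = b \<and>
    y = (if d then sIni X a else sTer X a) \<and> w = (if d then sTer X a else sIni X a))"
proof -
  have "a \<in> sEdge X \<Longrightarrow> (if d then sTer X a else sIni X a) \<in> sVert X" for a
    using X.sIni_closed X.sTer_closed by simp
  then show ?thesis
    unfolding path_lifts_Cons path_lifts_Nil by blast
qed

lemma path_lifts_backtrack: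
  assumes "path_lifts z [(b, d), (b, \<not> d)] z'"
  shows "z' = z"
proof -
  obtain m where m: "path_lifts z [(b, d)] m" "path_lifts m [(b, \<not> d)] z'"
    using assms path_lifts_append [of z "[(b, d)]" "[(b, \<not> d)]"] by auto
  obtain a1 where a1: "a1 \<in> sEdge X" "Le a1 = b" "z = (if d then sIni X a1 else sTer X a1)"
    "m = (if d then sTer X a1 else sIni X a1)"
    using m(1) unfolding path_lifts_single by blast
  obtain a2 where a2: "a2 \<in> sEdge X" "Le a2 = b" "m = (if \<not> d then sIni X a2 else sTer X a2)"
    "z' = (if \<not> d then sTer X a2 else sIni X a2)"
    using m(2) unfolding path_lifts_single by blast
  show ?thesis
  proof (cases d)
    case True
    then have "a1 = a2" using a1 a2 by (auto intro: Le_inj_on_in_star)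
    then show ?thesis using a1 a2 True by simp
  next
    case False
    then have "a1 = a2" using a1 a2 by (auto intro: Le_inj_on_out_star)
    then show ?thesis using a1 a2 False by simp
  qed
qed

lemma path_lifts_triangle:
  assumes ab: "composable X' a b"
    and p: "path_lifts z [(b, True), (a, True)] z1" and q: "path_lifts z [(sComp X' a b, True)] z2"
  shows "z1 = z2"
proof -
  obtain m where m: "path_lifts z [(b, True)] m" "path_lifts m [(a, True)] z1"
    using p path_lifts_append [of z "[(b, True)]" "[(a, True)]"] by auto
  obtain b1 where b1: "b1 \<in> sEdge X" "Le b1 = b" "z = sIni X b1" "m = sTer X b1"
    using m(1) unfolding path_lifts_single by auto
  obtain a1 where a1: "a1 \<in> sEdge X" "Le a1 = a" "m = sIni X a1" "z1 = sTer X a1"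
    using m(2) unfolding path_lifts_single by auto
  obtain c where c: "c \<in> sEdge X" "Le c = sComp X' a b" "z = sIni X c" "z2 = sTer X c"
    using q unfolding path_lifts_single by auto
  have ab1: "composable X a1 b1"
    using a1 b1 by (simp add: composable_def)
  have "c = sComp X a1 b1"
  proof (rule Le_inj_on_out_star)
    show "c \<in> sEdge X" "sComp X a1 b1 \<in> sEdge X" using c(1) X.sComp_closed [OF ab1] .
    show "sIni X c = sIni X (sComp X a1 b1)" using c(3) b1(3) X.sIni_sComp [OF ab1] by simp
    show "Le c = Le (sComp X a1 b1)" using c(2) a1(2) b1(2) Le_sComp [OF ab1] by simp
  qed
  then show ?thesis
    using c a1 X.sTer_sComp [OF ab1] by simp
qed

lemma path_lifts_ehstep:
  assumes "ehstep X' p r" "path_lifts y p w1" "path_lifts y r w2"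
  shows "w1 = w2"
  using assms(1)
proof cases
  case (backtrack b u d v)
  obtain z1 z1' where p: "path_lifts y u z1" "path_lifts z1 [(b, d), (b, \<not> d)] z1'" "path_lifts z1' v w1"
    using assms(2) unfolding backtrack path_lifts_append by blast
  obtain z2 where r: "path_lifts y u z2" "path_lifts z2 v w2"
    using assms(3) unfolding backtrack path_lifts_append by blast
  have "z1' = z2"
    using path_lifts_backtrack [OF p(2)] path_lifts_unique [OF p(1) r(1)] by simp
  then show ?thesis
    using path_lifts_unique p(3) r(2) by blast
next
  case (triangle a b u v)
  obtain z1 z1' where p: "path_lifts y u z1" "path_lifts z1 [(b, True), (a, True)] z1'" "path_lifts z1' v w1"
    using assms(2) unfolding triangle path_lifts_append by blast
  obtain z2 z2' where r: "path_lifts y u z2" "path_lifts z2 [(sComp X' a b, True)] z2'" "path_lifts z2' v w2"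
    using assms(3) unfolding triangle path_lifts_append by blast
  have "z1' = z2'"
    using path_lifts_triangle [OF triangle(3) p(2)] r(2) path_lifts_unique [OF p(1) r(1)] by simp
  then show ?thesis
    using path_lifts_unique p(3) r(3) by blast
qed

text \<open>A loop at \<open>Lv x\<^sub>1\<close> obtained from a path from \<open>x\<^sub>1\<close> to \<open>x\<^sub>2\<close> is null-homotopic, and
  elementary homotopies do not change the endpoint of the lift, which for the trivial loop is \<open>x\<^sub>1\<close>.\<close>
lemma inj_on_Lv:
  assumes conn: "scwol_connected X" and sc': "scwol_simply_connected X'"
  shows "inj_on Lv (sVert X)"
proof (rule inj_onI)
  fix x1 x2 assume x: "x1 \<in> sVert X" "x2 \<in> sVert X" "Lv x1 = Lv x2"
  obtain q where q: "epath X x1 q x2" using conn x by (auto simp: scwol_connected_def)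
  let ?v = "Lv x1"
  have "(ehrel X' ?v ?v)\<^sup>*\<^sup>* (map_epath q) []"
    using sc' epath_map_epath [OF q] Lv_closed x by (auto simp: scwol_simply_connected_def)
  then have "path_lifts x1 [] x2"
  proof (induction rule: rtranclp_induct)
    case base
    then show ?case using q by (auto simp: path_lifts_def)
  next
    case (step r s)
    then have s: "epath X' ?v s ?v" "ehstep X' r s \<or> ehstep X' s r"
      by (simp_all add: ehrel_def)
    then obtain w where "path_lifts x1 s w" using path_lift_exists x by blast
    then show ?case using s(2) step.IH path_lifts_ehstep by metis
  qed
  then show "x1 = x2" by (simp add: path_lifts_def map_epath_def)
qed

lemma Lv_surj:
  assumes conn: "scwol_connected X" and sc': "scwol_simply_connected X'"
  shows "Lv ` sVert X = sVert X'"
proof (intro equalityI subsetI)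
  fix v' assume v': "v' \<in> sVert X'"
  obtain x0 where x0: "x0 \<in> sVert X" using conn by (auto simp: scwol_connected_def)
  have "\<exists>p. epath X' (Lv x0) p v'"
    using sc' v' Lv_closed [OF x0] unfolding scwol_simply_connected_def scwol_connected_def by blast
  then obtain p where "epath X' (Lv x0) p v'" ..
  then obtain w where "path_lifts x0 p w" "Lv w = v'" using path_lift_exists x0 by blast
  then show "v' \<in> Lv ` sVert X" by (auto simp: path_lifts_def dest: X.epath_end_closed)
qed (auto simp: Lv_closed)

theorem scwol_iso_if_simply_connected:
  assumes conn: "scwol_connected X" and sc': "scwol_simply_connected X'"
  shows "scwol_iso X X' Lv Le"
proof (rule scwol_iso_if_bij_betw)
  have inj: "inj_on Lv (sVert X)" and surj: "Lv ` sVert X = sVert X'"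
    using inj_on_Lv Lv_surj assms by blast+
  then show "bij_betw Lv (sVert X) (sVert X')" by (simp add: bij_betw_def)
  show "bij_betw Le (sEdge X) (sEdge X')"
  proof (rule bij_betw_imageI)
    show "inj_on Le (sEdge X)"
    proof (rule inj_onI)
      fix a b assume ab: "a \<in> sEdge X" "b \<in> sEdge X" "Le a = Le b"
      then have "sIni X a = sIni X b"
        using inj X.sIni_closed sIni_Le by (metis inj_onD)
      then show "a = b" using ab Le_inj_on_out_star by blast
    qed
    show "Le ` sEdge X = sEdge X'"
    proof (intro equalityI subsetI)
      fix b assume b: "b \<in> sEdge X'"
      then obtain x where "x \<in> sVert X" "sIni X' b = Lv x"
        using surj X'.sIni_closed by (metis imageE)
      then show "b \<in> Le ` sEdge X"
        using out_star_lift b by (metis imageI)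
    qed (auto simp: Le_closed)
  qed
qed

end

section \<open>Group actions on scwols and their quotients\<close>

lemma (in group) mult_inv_cancel_left: "x \<in> carrier G \<Longrightarrow> y \<in> carrier G \<Longrightarrow> x \<otimes> (inv x \<otimes> y) = y"
  by (simp add: m_assoc [symmetric])

lemma (in group) inv_mult_cancel_left: "x \<in> carrier G \<Longrightarrow> y \<in> carrier G \<Longrightarrow> inv x \<otimes> (x \<otimes> y) = y"
  by (simp add: m_assoc [symmetric])

lemmas (in group) group_simps =
  m_assoc inv_mult_group mult_inv_cancel_left inv_mult_cancel_left m_closed inv_closed
  r_inv l_inv r_one l_one inv_inv

lemma orbitI: "g \<in> carrier G \<Longrightarrow> y = act g x \<Longrightarrow> y \<in> orbit G act x"
  by (auto simp: orbit_def)

lemma orbitE: "y \<in> orbit G act x \<Longrightarrow> (\<And>g. g \<in> carrier G \<Longrightarrow> y = act g x \<Longrightarrow> P) \<Longrightarrow> P"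
  by (auto simp: orbit_def)

locale set_action = group G for G :: "'g monoid" (structure) +
  fixes S :: "'x set" and act :: "'g \<Rightarrow> 'x \<Rightarrow> 'x"
  assumes act_closed: "g \<in> carrier G \<Longrightarrow> x \<in> S \<Longrightarrow> act g x \<in> S"
    and act_one: "x \<in> S \<Longrightarrow> act \<one> x = x"
    and act_mult: "g \<in> carrier G \<Longrightarrow> h \<in> carrier G \<Longrightarrow> x \<in> S \<Longrightarrow> act (g \<otimes> h) x = act g (act h x)"
begin

lemma inv_act_cancel: "g \<in> carrier G \<Longrightarrow> x \<in> S \<Longrightarrow> act (inv g) (act g x) = x"
  by (metis inv_closed l_inv act_mult act_one)

lemma act_inv_cancel: "g \<in> carrier G \<Longrightarrow> x \<in> S \<Longrightarrow> act g (act (inv g) x) = x"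
  by (metis inv_closed r_inv act_mult act_one)

lemma inv_act_eq_iff: "g \<in> carrier G \<Longrightarrow> x \<in> S \<Longrightarrow> y \<in> S \<Longrightarrow> act (inv g) y = x \<longleftrightarrow> y = act g x"
  by (auto simp: inv_act_cancel act_inv_cancel)

lemma orbit_self: "x \<in> S \<Longrightarrow> x \<in> orbit G act x"
  by (metis one_closed act_one orbitI)

lemma orbit_subset: "x \<in> S \<Longrightarrow> orbit G act x \<subseteq> S"
  by (auto simp: orbit_def act_closed)

lemma orbit_eq:
  assumes x: "x \<in> S" and y: "y \<in> orbit G act x"
  shows "orbit G act y = orbit G act x"
proof -
  obtain g where g: "g \<in> carrier G" "y = act g x" using y by (rule orbitE)
  show ?thesis
  proof (intro equalityI subsetI)
    fix z assume "z \<in> orbit G act y"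
    then obtain g' where g': "g' \<in> carrier G" "z = act g' y" by (rule orbitE)
    then show "z \<in> orbit G act x"
      using g x by (intro orbitI [of "g' \<otimes> g"]) (simp_all add: act_mult)
  next
    fix z assume "z \<in> orbit G act x"
    then obtain g' where g': "g' \<in> carrier G" "z = act g' x" by (rule orbitE)
    then show "z \<in> orbit G act y"
      using g x by (intro orbitI [of "g' \<otimes> inv g"]) (simp_all add: act_mult act_closed inv_act_cancel)
  qed
qed

lemma orbit_eq_iff: "x \<in> S \<Longrightarrow> y \<in> S \<Longrightarrow> orbit G act x = orbit G act y \<longleftrightarrow> y \<in> orbit G act x"
  using orbit_eq[of x y] orbit_self[of y] by auto

lemma stab_subgroup: "x \<in> S \<Longrightarrow> subgroup (stab G act x) G"
  by (rule subgroup.intro) (auto simp: stab_def act_mult act_one inv_act_eq_iff)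

lemma stab_mult_closed: "x \<in> S \<Longrightarrow> g \<in> stab G act x \<Longrightarrow> g' \<in> stab G act x \<Longrightarrow> g \<otimes> g' \<in> stab G act x"
  using stab_subgroup subgroup.m_closed by metis

lemma stab_conj:
  assumes g: "g \<in> carrier G" and x: "x \<in> S"
  shows "(\<lambda>u. g \<otimes> u \<otimes> inv g) ` stab G act x = stab G act (act g x)"
proof
  show "(\<lambda>u. g \<otimes> u \<otimes> inv g) ` stab G act x \<subseteq> stab G act (act g x)"
    using assms by (auto simp: stab_def act_mult inv_act_cancel act_closed)
  show "stab G act (act g x) \<subseteq> (\<lambda>u. g \<otimes> u \<otimes> inv g) ` stab G act x"
  proof
    fix v assume "v \<in> stab G act (act g x)"
    then have v: "v \<in> carrier G" "act v (act g x) = act g x" by (auto simp: stab_def)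
    have "inv g \<otimes> v \<otimes> g \<in> stab G act x"
      using assms v by (simp add: stab_def act_mult inv_act_cancel act_closed)
    moreover have "v = g \<otimes> (inv g \<otimes> v \<otimes> g) \<otimes> inv g"
      using g v by (simp add: group_simps)
    ultimately show "v \<in> (\<lambda>u. g \<otimes> u \<otimes> inv g) ` stab G act x" by blast
  qed
qed

end

locale scwol_group_action =
  fixes G :: "'g monoid" and X :: "('v, 'e) scwol"
    and av :: "'g \<Rightarrow> 'v \<Rightarrow> 'v" and ae :: "'g \<Rightarrow> 'e \<Rightarrow> 'e"
  assumes action: "scwol_action G X av ae"
begin

lemma group: "group G"
  using action by (simp add: scwol_action_def)

sublocale G: group G
  by (rule group)

sublocale wf_scwol X
  using action by unfold_locales (simp add: scwol_action_def)

lemma scwol_morph_act: "g \<in> carrier G \<Longrightarrow> scwol_morph X X (av g) (ae g)"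
  using action by (simp add: scwol_action_def scwol_iso_def)

sublocale V: set_action G "sVert X" av
  by (rule set_action.intro [OF group], unfold_locales)
    (use action scwol_morph_act in \<open>auto simp: scwol_action_def scwol_morph_def image_subset_iff\<close>)

sublocale E: set_action G "sEdge X" ae
  by (rule set_action.intro [OF group], unfold_locales)
    (use action scwol_morph_act in \<open>auto simp: scwol_action_def scwol_morph_def image_subset_iff\<close>)

lemma sIni_ae: "g \<in> carrier G \<Longrightarrow> a \<in> sEdge X \<Longrightarrow> sIni X (ae g a) = av g (sIni X a)"
  using scwol_morph_act [of g] by (auto simp: scwol_morph_def)

lemma sTer_ae: "g \<in> carrier G \<Longrightarrow> a \<in> sEdge X \<Longrightarrow> sTer X (ae g a) = av g (sTer X a)"
  using scwol_morph_act [of g] by (auto simp: scwol_morph_def)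

lemma ae_sComp: "g \<in> carrier G \<Longrightarrow> composable X a b \<Longrightarrow> ae g (sComp X a b) = sComp X (ae g a) (ae g b)"
  using scwol_morph_act [of g] by (auto simp: scwol_morph_def)

lemma composable_ae: "g \<in> carrier G \<Longrightarrow> composable X a b \<Longrightarrow> composable X (ae g a) (ae g b)"
  by (auto simp: composable_def E.act_closed sIni_ae sTer_ae)

lemma av_sIni_neq_sTer: "g \<in> carrier G \<Longrightarrow> a \<in> sEdge X \<Longrightarrow> av g (sIni X a) \<noteq> sTer X a"
  using action by (simp add: scwol_action_def)

lemma ae_fixed_iff_stab_sIni:
  assumes "a \<in> sEdge X" "g \<in> carrier G"
  shows "ae g a = a \<longleftrightarrow> g \<in> stab G av (sIni X a)"
  using assms action by (auto simp: scwol_action_def stab_def dest: arg_cong [where f = "sIni X"] simp: sIni_ae)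

lemma stab_sIni_subset_sTer:
  assumes a: "a \<in> sEdge X"
  shows "stab G av (sIni X a) \<subseteq> stab G av (sTer X a)"
proof
  fix g assume g: "g \<in> stab G av (sIni X a)"
  then have "g \<in> carrier G" by (simp add: stab_def)
  moreover from this have "av g (sTer X a) = sTer X a"
    using g a ae_fixed_iff_stab_sIni by (metis sTer_ae)
  ultimately show "g \<in> stab G av (sTer X a)" by (simp add: stab_def)
qed

lemma sIni_image_orbit: "a \<in> sEdge X \<Longrightarrow> sIni X ` orbit G ae a = orbit G av (sIni X a)"
  by (force simp: orbit_def sIni_ae)

lemma sTer_image_orbit: "a \<in> sEdge X \<Longrightarrow> sTer X ` orbit G ae a = orbit G av (sTer X a)"
  by (force simp: orbit_def sTer_ae)

lemma inj_on_sIni_orbit: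
  assumes a: "a \<in> sEdge X"
  shows "inj_on (sIni X) (orbit G ae a)"
proof (rule inj_onI)
  fix b c assume "b \<in> orbit G ae a" "c \<in> orbit G ae a" and ini: "sIni X b = sIni X c"
  then obtain g1 g2 where g: "g1 \<in> carrier G" "b = ae g1 a" "g2 \<in> carrier G" "c = ae g2 a"
    by (auto elim!: orbitE)
  let ?k = "g2 \<otimes>\<^bsub>G\<^esub> inv\<^bsub>G\<^esub> g1"
  have b: "b \<in> sEdge X" and k: "?k \<in> carrier G" using g a by (auto simp: E.act_closed)
  have c: "c = ae ?k b" using g a by (simp add: E.act_mult E.act_closed E.inv_act_cancel)
  then have "?k \<in> stab G av (sIni X b)"
    using k b ini by (simp add: stab_def sIni_ae)
  then show "b = c" using c b k ae_fixed_iff_stab_sIni by metis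
qed

abbreviation Y :: "('v set, 'e set) scwol" where
  "Y \<equiv> quotient_scwol G X av ae"

lemma quotient_simps:
  "sVert Y = orbit G av ` sVert X" "sEdge Y = orbit G ae ` sEdge X"
  "sIni Y A = sIni X ` A" "sTer Y A = sTer X ` A"
  "sComp Y A B = {sComp X a b | a b. a \<in> A \<and> b \<in> B \<and> sIni X a = sTer X b}"
  by (simp_all add: quotient_scwol_def)

lemma quotient_sVertE: "A \<in> sVert Y \<Longrightarrow> (\<And>x. x \<in> sVert X \<Longrightarrow> A = orbit G av x \<Longrightarrow> P) \<Longrightarrow> P"
  by (auto simp: quotient_simps)

lemma quotient_sEdgeE: "A \<in> sEdge Y \<Longrightarrow> (\<And>a. a \<in> sEdge X \<Longrightarrow> A = orbit G ae a \<Longrightarrow> P) \<Longrightarrow> P"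
  by (auto simp: quotient_simps)

lemma orbit_in_quotient_sVert: "x \<in> sVert X \<Longrightarrow> orbit G av x \<in> sVert Y"
  by (simp add: quotient_simps)

lemma orbit_in_quotient_sEdge: "a \<in> sEdge X \<Longrightarrow> orbit G ae a \<in> sEdge Y"
  by (simp add: quotient_simps)

lemma sIni_quotient_orbit: "a \<in> sEdge X \<Longrightarrow> sIni Y (orbit G ae a) = orbit G av (sIni X a)"
  by (simp add: quotient_simps sIni_image_orbit)

lemma sTer_quotient_orbit: "a \<in> sEdge X \<Longrightarrow> sTer Y (orbit G ae a) = orbit G av (sTer X a)"
  by (simp add: quotient_simps sTer_image_orbit)

lemma quotient_sEdge_subset: "A \<in> sEdge Y \<Longrightarrow> A \<subseteq> sEdge X"
  by (auto elim!: quotient_sEdgeE dest: E.orbit_subset)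

lemma quotient_sEdge_eq_orbit: "A \<in> sEdge Y \<Longrightarrow> a \<in> A \<Longrightarrow> A = orbit G ae a"
  by (metis quotient_sEdgeE E.orbit_eq)

lemma sComp_quotient_orbit:
  assumes ab: "composable X a b"
  shows "sComp Y (orbit G ae a) (orbit G ae b) = orbit G ae (sComp X a b)"
proof (intro equalityI subsetI)
  fix c assume "c \<in> orbit G ae (sComp X a b)"
  then obtain g where g: "g \<in> carrier G" "c = ae g (sComp X a b)" by (rule orbitE)
  then have "c = sComp X (ae g a) (ae g b)" "sIni X (ae g a) = sTer X (ae g b)"
    using ab composable_ae [OF g(1) ab] by (simp_all add: ae_sComp composable_def)
  moreover have "ae g a \<in> orbit G ae a" "ae g b \<in> orbit G ae b"
    using g by (auto intro: orbitI)
  ultimately show "c \<in> sComp Y (orbit G ae a) (orbit G ae b)"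
    unfolding quotient_simps by blast
next
  fix c assume "c \<in> sComp Y (orbit G ae a) (orbit G ae b)"
  then obtain g1 g2 where g: "g1 \<in> carrier G" "g2 \<in> carrier G"
    and c: "c = sComp X (ae g1 a) (ae g2 b)" "sIni X (ae g1 a) = sTer X (ae g2 b)"
    by (auto simp: quotient_simps elim!: orbitE)
  have a: "a \<in> sEdge X" "b \<in> sEdge X" "sIni X a = sTer X b"
    using ab by (auto simp: composable_def)
  have "ae g2 a \<in> orbit G ae a" "ae g1 a \<in> orbit G ae a"
    using g by (auto intro: orbitI)
  moreover have "sIni X (ae g2 a) = sIni X (ae g1 a)"
    using c(2) g a by (simp add: sIni_ae sTer_ae)
  ultimately have "ae g1 a = ae g2 a"
    using inj_on_sIni_orbit [OF a(1)] by (auto dest: inj_onD)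
  then have "c = ae g2 (sComp X a b)"
    using c(1) g ab by (simp add: ae_sComp)
  then show "c \<in> orbit G ae (sComp X a b)"
    by (rule orbitI [OF g(2)])
qed

lemma composable_quotient_lift_left:
  assumes AB: "composable Y A (orbit G ae b)" and b: "b \<in> sEdge X"
  obtains a where "composable X a b" "A = orbit G ae a"
proof -
  obtain a0 where a0: "a0 \<in> sEdge X" "A = orbit G ae a0"
    using AB by (auto simp: composable_def elim: quotient_sEdgeE)
  have "orbit G av (sIni X a0) = orbit G av (sTer X b)"
    using AB a0 b by (simp add: composable_def sIni_quotient_orbit sTer_quotient_orbit)
  then have "sTer X b \<in> orbit G av (sIni X a0)"
    using V.orbit_eq_iff a0 b sIni_closed sTer_closed by blast
  then obtain g where g: "g \<in> carrier G" "sTer X b = av g (sIni X a0)" by (rule orbitE)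
  have "composable X (ae g a0) b"
    using g a0 b by (simp add: composable_def E.act_closed sIni_ae)
  moreover have "A = orbit G ae (ae g a0)"
    using g a0 E.orbit_eq orbitI by metis
  ultimately show ?thesis using that by blast
qed

lemma composable_quotient_lift_right:
  assumes AB: "composable Y (orbit G ae a) B" and a: "a \<in> sEdge X"
  obtains b where "composable X a b" "B = orbit G ae b"
proof -
  obtain b0 where b0: "b0 \<in> sEdge X" "B = orbit G ae b0"
    using AB by (auto simp: composable_def elim: quotient_sEdgeE)
  have "orbit G av (sTer X b0) = orbit G av (sIni X a)"
    using AB b0 a by (simp add: composable_def sIni_quotient_orbit sTer_quotient_orbit)
  then have "sIni X a \<in> orbit G av (sTer X b0)"
    using V.orbit_eq_iff b0 a sIni_closed sTer_closed by blast
  then obtain g where g: "g \<in> carrier G" "sIni X a = av g (sTer X b0)" by (rule orbitE)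
  have "composable X a (ae g b0)"
    using g b0 a by (simp add: composable_def E.act_closed sTer_ae)
  moreover have "B = orbit G ae (ae g b0)"
    using g b0 E.orbit_eq orbitI by metis
  ultimately show ?thesis using that by blast
qed

lemma composable_quotientE:
  assumes "composable Y A B"
  obtains a b where "composable X a b" "A = orbit G ae a" "B = orbit G ae b"
proof -
  obtain b where "b \<in> sEdge X" "B = orbit G ae b"
    using assms by (auto simp: composable_def elim: quotient_sEdgeE)
  then show ?thesis using composable_quotient_lift_left assms that by metis
qed

lemma is_scwol_quotient: "is_scwol Y"
proof -
  have closed: "\<forall>A\<in>sEdge Y. sIni Y A \<in> sVert Y \<and> sTer Y A \<in> sVert Y"
    by (auto simp: sIni_quotient_orbit sTer_quotient_orbit orbit_in_quotient_sVert
        sIni_closed sTer_closed elim!: quotient_sEdgeE)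
  have comp: "sComp Y A B \<in> sEdge Y \<and> sIni Y (sComp Y A B) = sIni Y B \<and> sTer Y (sComp Y A B) = sTer Y A"
    if AB: "composable Y A B" for A B
  proof -
    obtain a b where ab: "composable X a b" "A = orbit G ae a" "B = orbit G ae b"
      using AB by (rule composable_quotientE)
    then show ?thesis
      using sComp_quotient_orbit [OF ab(1)]
      by (auto simp: composable_def orbit_in_quotient_sEdge sComp_closed
          sIni_quotient_orbit sTer_quotient_orbit sIni_sComp sTer_sComp)
  qed
  have assoc: "sComp Y (sComp Y A B) C = sComp Y A (sComp Y B C)"
    if AB: "composable Y A B" and BC: "composable Y B C" for A B C
  proof -
    obtain a b where ab: "composable X a b" "A = orbit G ae a" "B = orbit G ae b"
      using AB by (rule composable_quotientE)
    obtain c where bc: "composable X b c" "C = orbit G ae c"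
      using composable_quotient_lift_right BC ab(1,3) by (metis composable_def)
    have "composable X (sComp X a b) c" "composable X a (sComp X b c)"
      using ab(1) bc(1) by (simp_all add: composable_def sComp_closed sIni_sComp sTer_sComp)
    then show ?thesis
      using ab bc by (simp add: sComp_quotient_orbit sComp_assoc)
  qed
  have no_loop: "\<forall>A\<in>sEdge Y. sIni Y A \<noteq> sTer Y A"
  proof (intro ballI notI)
    fix A assume "A \<in> sEdge Y" "sIni Y A = sTer Y A"
    then obtain a where a: "a \<in> sEdge X" "orbit G av (sIni X a) = orbit G av (sTer X a)"
      by (auto simp: sIni_quotient_orbit sTer_quotient_orbit elim!: quotient_sEdgeE)
    then have "sTer X a \<in> orbit G av (sIni X a)"
      using V.orbit_eq_iff sIni_closed sTer_closed by blast
    then show False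
      using av_sIni_neq_sTer a(1) by (metis orbitE)
  qed
  show ?thesis
    unfolding is_scwol_def using closed comp assoc no_loop by blast
qed

sublocale Y: wf_scwol Y
  by unfold_locales (rule is_scwol_quotient)

lemma epath_quotient:
  "epath X x p y \<Longrightarrow> epath Y (orbit G av x) (map (\<lambda>(a, d). (orbit G ae a, d)) p) (orbit G av y)"
proof (induction p arbitrary: x)
  case Nil
  then show ?case by (auto simp: orbit_in_quotient_sVert)
next
  case (Cons a p)
  then show ?case
    by (cases a) (auto simp: orbit_in_quotient_sEdge sIni_quotient_orbit sTer_quotient_orbit)
qed

lemma scwol_connected_quotient: "scwol_connected X \<Longrightarrow> scwol_connected Y"
  unfolding scwol_connected_def
  by (auto simp: quotient_simps intro: epath_quotient)

lemma bij_betw_orbit_out_star: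
  assumes x: "x \<in> sVert X"
  shows "bij_betw (orbit G ae) {a \<in> sEdge X. sIni X a = x} {A \<in> sEdge Y. sIni Y A = orbit G av x}"
proof (rule bij_betw_imageI)
  show "inj_on (orbit G ae) {a \<in> sEdge X. sIni X a = x}"
    using inj_on_sIni_orbit E.orbit_self by (fastforce intro!: inj_onI dest: inj_onD)
  show "orbit G ae ` {a \<in> sEdge X. sIni X a = x} = {A \<in> sEdge Y. sIni Y A = orbit G av x}"
  proof (intro equalityI subsetI)
    fix A assume "A \<in> {A \<in> sEdge Y. sIni Y A = orbit G av x}"
    then obtain a where a: "a \<in> sEdge X" "A = orbit G ae a" "orbit G av (sIni X a) = orbit G av x"
      by (auto simp: sIni_quotient_orbit elim!: quotient_sEdgeE)
    then have "x \<in> orbit G av (sIni X a)"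
      using V.orbit_eq_iff sIni_closed x by blast
    then obtain g where g: "g \<in> carrier G" "x = av g (sIni X a)" by (rule orbitE)
    have "ae g a \<in> {a \<in> sEdge X. sIni X a = x}"
      using g a by (simp add: E.act_closed sIni_ae)
    moreover have "A = orbit G ae (ae g a)"
      using a g E.orbit_eq orbitI by metis
    ultimately show "A \<in> orbit G ae ` {a \<in> sEdge X. sIni X a = x}" by blast
  qed (auto simp: orbit_in_quotient_sEdge sIni_quotient_orbit)
qed

lemma bij_betw_ae_in_star:
  assumes g: "g \<in> carrier G" and x: "x \<in> sVert X"
  shows "bij_betw (ae g) {a \<in> sEdge X. sTer X a = x} {a \<in> sEdge X. sTer X a = av g x}"
  by (rule bij_betw_byWitness [where f' = "ae (inv\<^bsub>G\<^esub> g)"])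
    (use g x in \<open>auto simp: E.act_closed E.inv_act_cancel E.act_inv_cancel sTer_ae V.inv_act_cancel\<close>)

end

section \<open>The associated complex of groups\<close>

locale scwol_action_choice = scwol_group_action G X av ae
  for G :: "'g monoid" and X :: "('v, 'e) scwol"
    and av :: "'g \<Rightarrow> 'v \<Rightarrow> 'v" and ae :: "'g \<Rightarrow> 'e \<Rightarrow> 'e" +
  fixes bar :: "'v set \<Rightarrow> 'v" and h :: "'e set \<Rightarrow> 'g"
  assumes valid_choice: "valid_choice G X av ae bar h"
begin

abbreviation lift :: "'e set \<Rightarrow> 'e" where
  "lift A \<equiv> lift_edge X bar A"

text \<open>The lift of \<open>A\<close> ending at \<open>bar (sTer Y A)\<close>.\<close>
definition terminal_lift :: "'e set \<Rightarrow> 'e" where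
  "terminal_lift A = ae (h A) (lift A)"

abbreviation Gs :: "'v set \<Rightarrow> 'g monoid" where
  "Gs \<equiv> assoc_groups G av bar"

abbreviation psi :: "'e set \<Rightarrow> 'g \<Rightarrow> 'g" where
  "psi \<equiv> assoc_psi G h"

abbreviation gab :: "'e set \<Rightarrow> 'e set \<Rightarrow> 'g" where
  "gab \<equiv> assoc_twist G X av ae h"

lemma bar_in: "\<sigma> \<in> sVert Y \<Longrightarrow> bar \<sigma> \<in> \<sigma>"
  using valid_choice by (simp add: valid_choice_def Let_def)

lemma bar_closed: "\<sigma> \<in> sVert Y \<Longrightarrow> bar \<sigma> \<in> sVert X"
  using bar_in V.orbit_subset by (blast elim: quotient_sVertE)

lemma orbit_bar: "\<sigma> \<in> sVert Y \<Longrightarrow> orbit G av (bar \<sigma>) = \<sigma>"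
  by (metis quotient_sVertE bar_in V.orbit_eq)

lemma h_closed: "A \<in> sEdge Y \<Longrightarrow> h A \<in> carrier G"
  using valid_choice by (simp add: valid_choice_def Let_def)

lemma av_h_sTer_lift: "A \<in> sEdge Y \<Longrightarrow> av (h A) (sTer X (lift A)) = bar (sTer Y A)"
  using valid_choice by (simp add: valid_choice_def Let_def)

lemma lift_edge_unique:
  assumes A: "A \<in> sEdge Y"
  shows "\<exists>!a. a \<in> A \<and> sIni X a = bar (sIni Y A)"
proof -
  obtain a where a: "a \<in> sEdge X" "A = orbit G ae a" using A by (rule quotient_sEdgeE)
  have "bar (sIni Y A) \<in> sIni X ` A"
    using bar_in Y.sIni_closed A by (simp add: quotient_simps)
  then obtain x where x: "x \<in> A" "sIni X x = bar (sIni Y A)" by (metis imageE)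
  moreover have "inj_on (sIni X) A" using inj_on_sIni_orbit a by simp
  ultimately show ?thesis by (intro ex1I [of _ x]) (simp, metis inj_onD)
qed

lemma lift_edge_in: "A \<in> sEdge Y \<Longrightarrow> lift A \<in> A"
  and sIni_lift_edge: "A \<in> sEdge Y \<Longrightarrow> sIni X (lift A) = bar (sIni Y A)"
  using theI' [OF lift_edge_unique] by (auto simp: lift_edge_def quotient_simps)

lemma lift_edge_eqI: "A \<in> sEdge Y \<Longrightarrow> a \<in> A \<Longrightarrow> sIni X a = bar (sIni Y A) \<Longrightarrow> lift A = a"
  using lift_edge_unique lift_edge_in sIni_lift_edge by blast

lemma lift_edge_closed: "A \<in> sEdge Y \<Longrightarrow> lift A \<in> sEdge X"
  using lift_edge_in quotient_sEdge_subset by blast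

lemma orbit_lift_edge: "A \<in> sEdge Y \<Longrightarrow> orbit G ae (lift A) = A"
  using lift_edge_in quotient_sEdge_eq_orbit by metis

lemma terminal_lift_in: "A \<in> sEdge Y \<Longrightarrow> terminal_lift A \<in> A"
  unfolding terminal_lift_def using orbit_lift_edge h_closed by (metis orbitI)

lemma terminal_lift_closed: "A \<in> sEdge Y \<Longrightarrow> terminal_lift A \<in> sEdge X"
  using terminal_lift_in quotient_sEdge_subset by blast

lemma sTer_terminal_lift: "A \<in> sEdge Y \<Longrightarrow> sTer X (terminal_lift A) = bar (sTer Y A)"
  unfolding terminal_lift_def by (simp add: sTer_ae h_closed lift_edge_closed av_h_sTer_lift)

lemma sIni_terminal_lift: "A \<in> sEdge Y \<Longrightarrow> sIni X (terminal_lift A) = av (h A) (bar (sIni Y A))"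
  unfolding terminal_lift_def by (simp add: sIni_ae h_closed lift_edge_closed sIni_lift_edge)

lemma orbit_terminal_lift: "A \<in> sEdge Y \<Longrightarrow> orbit G ae (terminal_lift A) = A"
  using terminal_lift_in quotient_sEdge_eq_orbit by metis

lemma carrier_Gs: "carrier (Gs \<sigma>) = stab G av (bar \<sigma>)"
  by (simp add: assoc_groups_def)

lemma mult_Gs: "mult (Gs \<sigma>) = mult G"
  by (simp add: assoc_groups_def)

lemma group_Gs: "\<sigma> \<in> sVert Y \<Longrightarrow> group (Gs \<sigma>)"
  unfolding assoc_groups_def using V.stab_subgroup bar_closed G.subgroup_imp_group by blast

lemma inv_Gs: "\<sigma> \<in> sVert Y \<Longrightarrow> x \<in> stab G av (bar \<sigma>) \<Longrightarrow> inv\<^bsub>Gs \<sigma>\<^esub> x = inv\<^bsub>G\<^esub> x"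
  unfolding assoc_groups_def using V.stab_subgroup bar_closed G.m_inv_consistent by blast

lemma psi_image:
  assumes A: "A \<in> sEdge Y"
  shows "psi A ` stab G av (bar (sIni Y A)) = stab G av (sIni X (terminal_lift A))"
  using V.stab_conj [OF h_closed [OF A] bar_closed [OF Y.sIni_closed [OF A]]]
  by (simp add: assoc_psi_def sIni_terminal_lift A)

lemma psi_closed:
  assumes A: "A \<in> sEdge Y" and g: "g \<in> stab G av (bar (sIni Y A))"
  shows "psi A g \<in> stab G av (bar (sTer Y A))"
  using psi_image [OF A] g stab_sIni_subset_sTer [OF terminal_lift_closed [OF A]]
  by (auto simp: sTer_terminal_lift A)

lemma composable_lift_edge:
  assumes AB: "composable Y A B"
  shows "composable X (ae (inv\<^bsub>G\<^esub> h B) (lift A)) (lift B)"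
proof -
  have A: "A \<in> sEdge Y" and B: "B \<in> sEdge Y" and iAtB: "sIni Y A = sTer Y B"
    using AB by (auto simp: composable_def)
  have hB: "h B \<in> carrier G" using h_closed B .
  have "sTer X (lift B) = av (inv\<^bsub>G\<^esub> h B) (bar (sTer Y B))"
    using V.inv_act_cancel [OF hB sTer_closed [OF lift_edge_closed [OF B]]] av_h_sTer_lift [OF B]
    by simp
  then show ?thesis
    using A B hB iAtB by (simp add: composable_def E.act_closed lift_edge_closed sIni_ae sIni_lift_edge)
qed

lemma lift_edge_sComp:
  assumes AB: "composable Y A B"
  shows "lift (sComp Y A B) = sComp X (ae (inv\<^bsub>G\<^esub> h B) (lift A)) (lift B)"
proof -
  let ?a = "ae (inv\<^bsub>G\<^esub> h B) (lift A)"
  have A: "A \<in> sEdge Y" and B: "B \<in> sEdge Y"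
    using AB by (auto simp: composable_def)
  note ab = composable_lift_edge [OF AB]
  have "orbit G ae ?a = A"
    using A h_closed [OF B] by (metis G.inv_closed orbit_lift_edge lift_edge_closed E.orbit_eq orbitI)
  then have "sComp X ?a (lift B) \<in> sComp Y A B"
    using sComp_quotient_orbit [OF ab] orbit_lift_edge [OF B] E.orbit_self sComp_closed [OF ab]
    by simp
  moreover have "sIni X (sComp X ?a (lift B)) = bar (sIni Y (sComp Y A B))"
    using B AB by (simp add: sIni_sComp [OF ab] Y.sIni_sComp sIni_lift_edge)
  ultimately show ?thesis
    using lift_edge_eqI Y.sComp_closed [OF AB] by blast
qed

lemma gab_closed:
  assumes AB: "composable Y A B"
  shows "gab A B \<in> stab G av (bar (sTer Y A))"
proof -
  have A: "A \<in> sEdge Y" and B: "B \<in> sEdge Y" and AB': "sComp Y A B \<in> sEdge Y"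
    using AB Y.sComp_closed by (auto simp: composable_def)
  have h: "h A \<in> carrier G" "h B \<in> carrier G" "h (sComp Y A B) \<in> carrier G"
    using h_closed A B AB' by auto
  have "av (inv\<^bsub>G\<^esub> h (sComp Y A B)) (bar (sTer Y A)) = sTer X (lift (sComp Y A B))"
    using V.inv_act_cancel [OF h(3) sTer_closed [OF lift_edge_closed [OF AB']]]
      av_h_sTer_lift [OF AB'] Y.sTer_sComp [OF AB] by simp
  also have "\<dots> = av (inv\<^bsub>G\<^esub> h B) (sTer X (lift A))"
    using lift_edge_sComp [OF AB] sTer_sComp [OF composable_lift_edge [OF AB]] h(2) A
    by (simp add: sTer_ae lift_edge_closed)
  finally have "av (gab A B) (bar (sTer Y A)) = bar (sTer Y A)"
    unfolding assoc_twist_def using h A B bar_closed Y.sTer_closed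
    by (simp add: V.act_mult V.act_closed V.act_inv_cancel lift_edge_closed sTer_closed av_h_sTer_lift)
  then show ?thesis
    using h by (simp add: stab_def assoc_twist_def)
qed

lemma psi_hom:
  assumes A: "A \<in> sEdge Y"
  shows "psi A \<in> hom (Gs (sIni Y A)) (Gs (sTer Y A))"
proof (rule homI)
  show "psi A x \<in> carrier (Gs (sTer Y A))" if "x \<in> carrier (Gs (sIni Y A))" for x
    using psi_closed A that by (simp add: carrier_Gs)
  show "psi A (x \<otimes>\<^bsub>Gs (sIni Y A)\<^esub> y) = psi A x \<otimes>\<^bsub>Gs (sTer Y A)\<^esub> psi A y"
    if "x \<in> carrier (Gs (sIni Y A))" "y \<in> carrier (Gs (sIni Y A))" for x y
    using that h_closed [OF A] by (auto simp: carrier_Gs mult_Gs stab_def assoc_psi_def G.group_simps)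
qed

lemma inj_on_psi: "A \<in> sEdge Y \<Longrightarrow> inj_on (psi A) (carrier (Gs (sIni Y A)))"
  by (rule inj_onI) (auto simp: carrier_Gs stab_def assoc_psi_def h_closed G.m_assoc)

lemma complex_of_groups_assoc: "complex_of_groups Y Gs psi gab"
  unfolding complex_of_groups_def
proof (intro conjI ballI allI impI)
  show "is_scwol Y" by (rule is_scwol_quotient)
  show "group (Gs \<sigma>)" if "\<sigma> \<in> sVert Y" for \<sigma> using group_Gs that .
  show "psi A \<in> hom (Gs (sIni Y A)) (Gs (sTer Y A))" "inj_on (psi A) (carrier (Gs (sIni Y A)))"
    if "A \<in> sEdge Y" for A
    using that by (simp_all add: psi_hom inj_on_psi)
next
  fix A B assume AB: "composable Y A B"
  then have h: "h A \<in> carrier G" "h B \<in> carrier G" "h (sComp Y A B) \<in> carrier G"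
    using h_closed Y.sComp_closed by (auto simp: composable_def)
  show "gab A B \<in> carrier (Gs (sTer Y A))"
    using gab_closed AB by (simp add: carrier_Gs)
  have "inv\<^bsub>Gs (sTer Y A)\<^esub> gab A B = inv\<^bsub>G\<^esub> gab A B"
    using inv_Gs gab_closed AB Y.sTer_closed by (auto simp: composable_def)
  then show "gab A B \<otimes>\<^bsub>Gs (sTer Y A)\<^esub> psi (sComp Y A B) g \<otimes>\<^bsub>Gs (sTer Y A)\<^esub> inv\<^bsub>Gs (sTer Y A)\<^esub> gab A B
      = psi A (psi B g)" if "g \<in> carrier (Gs (sIni Y B))" for g
    using that h by (simp add: mult_Gs carrier_Gs stab_def assoc_twist_def assoc_psi_def G.group_simps)
next
  fix A B C assume "composable Y A B \<and> composable Y B C"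
  then have AB: "composable Y A B" and BC: "composable Y B C" by auto
  have BC': "sComp Y B C \<in> sEdge Y" "sIni Y A = sTer Y (sComp Y B C)"
    using AB BC Y.sComp_closed Y.sTer_sComp by (auto simp: composable_def)
  have "h A \<in> carrier G" "h B \<in> carrier G" "h C \<in> carrier G" "h (sComp Y A B) \<in> carrier G"
    "h (sComp Y B C) \<in> carrier G" "h (sComp Y A (sComp Y B C)) \<in> carrier G"
    using AB BC BC' h_closed Y.sComp_closed by (auto simp: composable_def)
  then show "psi A (gab B C) \<otimes>\<^bsub>Gs (sTer Y A)\<^esub> gab A (sComp Y B C)
      = gab A B \<otimes>\<^bsub>Gs (sTer Y A)\<^esub> gab (sComp Y A B) C"
    using Y.sComp_assoc [OF AB BC]
    by (simp add: mult_Gs assoc_twist_def assoc_psi_def G.group_simps)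
qed

text \<open>The left cosets of \<open>psi A ` carrier (Gs (sIni Y A))\<close> in \<open>Gs (sTer Y A)\<close> are the sets of
  elements carrying the terminal lift of \<open>A\<close> to a fixed lift of \<open>A\<close> ending at \<open>bar (sTer Y A)\<close>.\<close>
definition lift_coset :: "'e set \<Rightarrow> 'e \<Rightarrow> 'g set" where
  "lift_coset A e = {g \<in> stab G av (bar (sTer Y A)). ae g (terminal_lift A) = e}"

lemma l_coset_psi_eq_lift_coset:
  assumes A: "A \<in> sEdge Y" and c: "c \<in> stab G av (bar (sTer Y A))"
  shows "c <#\<^bsub>Gs (sTer Y A)\<^esub> (psi A ` carrier (Gs (sIni Y A))) = lift_coset A (ae c (terminal_lift A))"
proof -
  let ?e = "terminal_lift A" and ?K = "stab G av (sIni X (terminal_lift A))"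
  have e: "?e \<in> sEdge X" using terminal_lift_closed A .
  have cc: "c \<in> carrier G" using c by (simp add: stab_def)
  have "c <#\<^bsub>G\<^esub> ?K = lift_coset A (ae c ?e)"
  proof (intro equalityI subsetI)
    fix u assume "u \<in> c <#\<^bsub>G\<^esub> ?K"
    then obtain w where w: "w \<in> ?K" "u = c \<otimes>\<^bsub>G\<^esub> w" by (auto simp: l_coset_def)
    have "w \<in> stab G av (bar (sTer Y A))"
      using w(1) stab_sIni_subset_sTer [OF e] sTer_terminal_lift [OF A] by auto
    then have "u \<in> stab G av (bar (sTer Y A))"
      using w(2) c V.stab_mult_closed bar_closed Y.sTer_closed A by blast
    moreover have "ae u ?e = ae c ?e"
    proof -
      have wc: "w \<in> carrier G" using w(1) by (simp add: stab_def)
      then have "ae w ?e = ?e" using ae_fixed_iff_stab_sIni [OF e] w(1) by simp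
      then show ?thesis using w(2) wc cc e by (simp add: E.act_mult)
    qed
    ultimately show "u \<in> lift_coset A (ae c ?e)" by (simp add: lift_coset_def)
  next
    fix u assume "u \<in> lift_coset A (ae c ?e)"
    then have u: "u \<in> carrier G" "ae u ?e = ae c ?e" by (auto simp: lift_coset_def stab_def)
    then have "ae (inv\<^bsub>G\<^esub> c \<otimes>\<^bsub>G\<^esub> u) ?e = ?e"
      using cc e by (simp add: E.act_mult E.inv_act_cancel)
    then have "inv\<^bsub>G\<^esub> c \<otimes>\<^bsub>G\<^esub> u \<in> ?K"
      using ae_fixed_iff_stab_sIni [OF e] u cc by simp
    moreover have "u = c \<otimes>\<^bsub>G\<^esub> (inv\<^bsub>G\<^esub> c \<otimes>\<^bsub>G\<^esub> u)"
      using u cc by (simp add: G.mult_inv_cancel_left)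
    ultimately show "u \<in> c <#\<^bsub>G\<^esub> ?K" by (auto simp: l_coset_def)
  qed
  then show ?thesis
    using psi_image [OF A] by (simp add: carrier_Gs l_coset_def mult_Gs)
qed

lemma lift_eq_ae_terminal_lift:
  assumes A: "A \<in> sEdge Y" and e: "e \<in> A" "sTer X e = bar (sTer Y A)"
  obtains c where "c \<in> stab G av (bar (sTer Y A))" "e = ae c (terminal_lift A)"
proof -
  obtain c where c: "c \<in> carrier G" "e = ae c (terminal_lift A)"
    using e(1) orbit_terminal_lift [OF A] by (metis orbitE)
  then have "c \<in> stab G av (bar (sTer Y A))"
    using e(2) sTer_terminal_lift [OF A] terminal_lift_closed [OF A] by (simp add: stab_def sTer_ae)
  then show ?thesis using c that by blast
qed

lemma bij_betw_lift_coset: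
  assumes A: "A \<in> sEdge Y"
  shows "bij_betw (lift_coset A) {e \<in> A. sTer X e = bar (sTer Y A)}
    (lcosets\<^bsub>Gs (sTer Y A)\<^esub> (psi A ` carrier (Gs (sIni Y A))))"
proof (rule bij_betw_imageI)
  show "inj_on (lift_coset A) {e \<in> A. sTer X e = bar (sTer Y A)}"
  proof (rule inj_onI)
    fix e1 e2 assume e1: "e1 \<in> {e \<in> A. sTer X e = bar (sTer Y A)}"
      and eq: "lift_coset A e1 = lift_coset A e2"
    obtain c where c: "c \<in> stab G av (bar (sTer Y A))" "e1 = ae c (terminal_lift A)"
      using lift_eq_ae_terminal_lift A e1 by blast
    then have "c \<in> lift_coset A e1" by (simp add: lift_coset_def)
    then have "c \<in> lift_coset A e2" using eq by simp
    then show "e1 = e2" using c(2) by (simp add: lift_coset_def)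
  qed
  show "lift_coset A ` {e \<in> A. sTer X e = bar (sTer Y A)}
    = lcosets\<^bsub>Gs (sTer Y A)\<^esub> (psi A ` carrier (Gs (sIni Y A)))"
  proof (intro equalityI subsetI)
    fix C assume "C \<in> lift_coset A ` {e \<in> A. sTer X e = bar (sTer Y A)}"
    then obtain e where e: "e \<in> A" "sTer X e = bar (sTer Y A)" "C = lift_coset A e" by blast
    obtain c where "c \<in> stab G av (bar (sTer Y A))" "e = ae c (terminal_lift A)"
      using lift_eq_ae_terminal_lift A e by blast
    then show "C \<in> lcosets\<^bsub>Gs (sTer Y A)\<^esub> (psi A ` carrier (Gs (sIni Y A)))"
      using l_coset_psi_eq_lift_coset [OF A] e(3) by (auto simp: LCOSETS_def carrier_Gs)
  next
    fix C assume "C \<in> lcosets\<^bsub>Gs (sTer Y A)\<^esub> (psi A ` carrier (Gs (sIni Y A)))"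
    then obtain c where c: "c \<in> stab G av (bar (sTer Y A))"
      "C = c <#\<^bsub>Gs (sTer Y A)\<^esub> (psi A ` carrier (Gs (sIni Y A)))"
      by (auto simp: LCOSETS_def carrier_Gs)
    have "ae c (terminal_lift A) \<in> A" "sTer X (ae c (terminal_lift A)) = bar (sTer Y A)"
      using c(1) orbit_terminal_lift [OF A] sTer_terminal_lift [OF A] terminal_lift_closed [OF A]
      by (auto simp: stab_def sTer_ae intro: orbitI)
    then show "C \<in> lift_coset A ` {e \<in> A. sTer X e = bar (sTer Y A)}"
      using l_coset_psi_eq_lift_coset [OF A c(1)] c(2) by blast
  qed
qed

lemma lift_coset_eq_l_coset:
  assumes A: "A \<in> sEdge Y" and p: "p \<in> lift_coset A e"
  shows "lift_coset A e = p <#\<^bsub>Gs (sTer Y A)\<^esub> (psi A ` carrier (Gs (sIni Y A)))"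
  using l_coset_psi_eq_lift_coset [OF A] p by (simp add: lift_coset_def)

lemma bij_betw_lift_coset_pairs:
  assumes \<sigma>: "\<sigma> \<in> sVert Y"
  shows "bij_betw (\<lambda>e. (orbit G ae e, lift_coset (orbit G ae e) e))
    {e \<in> sEdge X. sTer X e = bar \<sigma> \<and> P (orbit G ae e)}
    {(A, C). A \<in> sEdge Y \<and> P A \<and> sTer Y A = \<sigma> \<and>
      C \<in> lcosets\<^bsub>Gs \<sigma>\<^esub> (psi A ` carrier (Gs (sIni Y A)))}"
proof (rule bij_betw_imageI)
  have orbit: "orbit G ae e \<in> sEdge Y" "e \<in> orbit G ae e" "sTer Y (orbit G ae e) = \<sigma>"
    if "e \<in> sEdge X" "sTer X e = bar \<sigma>" for e
    using that \<sigma> by (simp_all add: orbit_in_quotient_sEdge E.orbit_self sTer_quotient_orbit orbit_bar)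
  show "inj_on (\<lambda>e. (orbit G ae e, lift_coset (orbit G ae e) e))
    {e \<in> sEdge X. sTer X e = bar \<sigma> \<and> P (orbit G ae e)}"
  proof (rule inj_onI)
    fix e1 e2 assume e: "e1 \<in> {e \<in> sEdge X. sTer X e = bar \<sigma> \<and> P (orbit G ae e)}"
      "e2 \<in> {e \<in> sEdge X. sTer X e = bar \<sigma> \<and> P (orbit G ae e)}"
      and eq: "(orbit G ae e1, lift_coset (orbit G ae e1) e1) = (orbit G ae e2, lift_coset (orbit G ae e2) e2)"
    let ?A = "orbit G ae e1"
    have "?A \<in> sEdge Y" using orbit e(1) by simp
    then have "inj_on (lift_coset ?A) {e \<in> ?A. sTer X e = bar (sTer Y ?A)}"
      using bij_betw_lift_coset by (simp add: bij_betw_def)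
    moreover have "e1 \<in> {e \<in> ?A. sTer X e = bar (sTer Y ?A)}" "e2 \<in> {e \<in> ?A. sTer X e = bar (sTer Y ?A)}"
      using orbit e eq by auto
    moreover have "lift_coset ?A e1 = lift_coset ?A e2"
      using eq by (metis prod.inject)
    ultimately show "e1 = e2"
      by (meson inj_onD)
  qed
  show "(\<lambda>e. (orbit G ae e, lift_coset (orbit G ae e) e)) ` {e \<in> sEdge X. sTer X e = bar \<sigma> \<and> P (orbit G ae e)}
    = {(A, C). A \<in> sEdge Y \<and> P A \<and> sTer Y A = \<sigma> \<and> C \<in> lcosets\<^bsub>Gs \<sigma>\<^esub> (psi A ` carrier (Gs (sIni Y A)))}"
  proof (intro equalityI subsetI)
    fix z assume "z \<in> (\<lambda>e. (orbit G ae e, lift_coset (orbit G ae e) e)) `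
      {e \<in> sEdge X. sTer X e = bar \<sigma> \<and> P (orbit G ae e)}"
    then obtain e where e: "e \<in> sEdge X" "sTer X e = bar \<sigma>" "P (orbit G ae e)"
      and z: "z = (orbit G ae e, lift_coset (orbit G ae e) e)" by blast
    then show "z \<in> {(A, C). A \<in> sEdge Y \<and> P A \<and> sTer Y A = \<sigma> \<and>
        C \<in> lcosets\<^bsub>Gs \<sigma>\<^esub> (psi A ` carrier (Gs (sIni Y A)))}"
      using bij_betw_lift_coset [OF orbit(1) [OF e(1,2)]] orbit [OF e(1,2)]
      by (auto simp: bij_betw_def)
  next
    fix z assume "z \<in> {(A, C). A \<in> sEdge Y \<and> P A \<and> sTer Y A = \<sigma> \<and>
      C \<in> lcosets\<^bsub>Gs \<sigma>\<^esub> (psi A ` carrier (Gs (sIni Y A)))}"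
    then obtain A C where z: "z = (A, C)" "A \<in> sEdge Y" "P A" "sTer Y A = \<sigma>"
      "C \<in> lcosets\<^bsub>Gs (sTer Y A)\<^esub> (psi A ` carrier (Gs (sIni Y A)))" by auto
    then obtain e where e: "e \<in> A" "sTer X e = bar \<sigma>" "C = lift_coset A e"
      using bij_betw_lift_coset [OF z(2)] by (auto simp: bij_betw_def)
    moreover have "orbit G ae e = A" "e \<in> sEdge X"
      using quotient_sEdge_eq_orbit quotient_sEdge_subset z(2) e(1) by auto
    ultimately show "z \<in> (\<lambda>e. (orbit G ae e, lift_coset (orbit G ae e) e)) `
      {e \<in> sEdge X. sTer X e = bar \<sigma> \<and> P (orbit G ae e)}"
      using z by force
  qed
qed

end

section \<open>The induced morphism of complexes of groups\<close>

locale equivariant_scwol_morph =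
  X: scwol_group_action G X av ae + X': scwol_group_action G' X' av' ae'
  for G :: "'g monoid" and X :: "('v, 'e) scwol" and av ae
    and G' :: "'h monoid" and X' :: "('w, 'f) scwol" and av' ae' +
  fixes \<Lambda> :: "'g \<Rightarrow> 'h" and Lv :: "'v \<Rightarrow> 'w" and Le :: "'e \<Rightarrow> 'f"
  assumes equivariant: "equivariant_morph G X av ae G' X' av' ae' \<Lambda> Lv Le"
begin

sublocale wf_scwol_morph X X' Lv Le
  using equivariant by unfold_locales (simp add: equivariant_morph_def)

sublocale \<Lambda>: group_hom G G' \<Lambda>
  using equivariant X.group X'.group
  by (simp add: equivariant_morph_def group_hom_def group_hom_axioms_def)

lemma Lv_av: "g \<in> carrier G \<Longrightarrow> v \<in> sVert X \<Longrightarrow> Lv (av g v) = av' (\<Lambda> g) (Lv v)"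
  using equivariant by (simp add: equivariant_morph_def)

lemma Le_ae: "g \<in> carrier G \<Longrightarrow> a \<in> sEdge X \<Longrightarrow> Le (ae g a) = ae' (\<Lambda> g) (Le a)"
  using equivariant by (simp add: equivariant_morph_def)

abbreviation lv :: "'v set \<Rightarrow> 'w set" where
  "lv \<equiv> induced_map G' av' Lv"

abbreviation led :: "'e set \<Rightarrow> 'f set" where
  "led \<equiv> induced_map G' ae' Le"

lemma induced_map_orbit:
  assumes S: "set_action G S act" "set_action G' S' act'" and x: "x \<in> S"
    and L: "\<And>y. y \<in> S \<Longrightarrow> L y \<in> S'"
    and equiv: "\<And>g y. g \<in> carrier G \<Longrightarrow> y \<in> S \<Longrightarrow> L (act g y) = act' (\<Lambda> g) (L y)"
  shows "induced_map G' act' L (orbit G act x) = orbit G' act' (L x)"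
proof (intro equalityI subsetI)
  fix z assume "z \<in> induced_map G' act' L (orbit G act x)"
  then obtain g' g where g: "g' \<in> carrier G'" "g \<in> carrier G" "z = act' g' (L (act g x))"
    by (auto simp: induced_map_def elim: orbitE)
  then have "z = act' (g' \<otimes>\<^bsub>G'\<^esub> \<Lambda> g) (L x)"
    using x L equiv set_action.act_mult [OF S(2)] by simp
  then show "z \<in> orbit G' act' (L x)"
    using g by (intro orbitI) auto
next
  fix z assume "z \<in> orbit G' act' (L x)"
  then show "z \<in> induced_map G' act' L (orbit G act x)"
    unfolding induced_map_def using set_action.orbit_self [OF S(1) x] by (blast elim: orbitE)
qed

lemma lv_orbit: "x \<in> sVert X \<Longrightarrow> lv (orbit G av x) = orbit G' av' (Lv x)"
  by (rule induced_map_orbit [OF X.V.set_action_axioms X'.V.set_action_axioms])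
    (auto simp: Lv_closed Lv_av)

lemma led_orbit: "a \<in> sEdge X \<Longrightarrow> led (orbit G ae a) = orbit G' ae' (Le a)"
  by (rule induced_map_orbit [OF X.E.set_action_axioms X'.E.set_action_axioms])
    (auto simp: Le_closed Le_ae)

lemma lv_closed: "\<sigma> \<in> sVert X.Y \<Longrightarrow> lv \<sigma> \<in> sVert X'.Y"
  by (auto elim!: X.quotient_sVertE simp: lv_orbit Lv_closed X'.orbit_in_quotient_sVert)

lemma led_closed: "A \<in> sEdge X.Y \<Longrightarrow> led A \<in> sEdge X'.Y"
  by (auto elim!: X.quotient_sEdgeE simp: led_orbit Le_closed X'.orbit_in_quotient_sEdge)

lemma sIni_led: "A \<in> sEdge X.Y \<Longrightarrow> sIni X'.Y (led A) = lv (sIni X.Y A)"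
  by (auto elim!: X.quotient_sEdgeE simp: led_orbit lv_orbit Le_closed sIni_Le
      X.sIni_closed X.sIni_quotient_orbit X'.sIni_quotient_orbit)

lemma sTer_led: "A \<in> sEdge X.Y \<Longrightarrow> sTer X'.Y (led A) = lv (sTer X.Y A)"
  by (auto elim!: X.quotient_sEdgeE simp: led_orbit lv_orbit Le_closed sTer_Le
      X.sTer_closed X.sTer_quotient_orbit X'.sTer_quotient_orbit)

lemma led_sComp:
  assumes "composable X.Y A B"
  shows "led (sComp X.Y A B) = sComp X'.Y (led A) (led B)"
proof -
  obtain a b where ab: "composable X a b" "A = orbit G ae a" "B = orbit G ae b"
    using assms by (rule X.composable_quotientE)
  then show ?thesis
    using X.sComp_quotient_orbit [OF ab(1)] X'.sComp_quotient_orbit [OF composable_Le [OF ab(1)]]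
      X.sComp_closed [OF ab(1)]
    by (auto simp: composable_def led_orbit Le_sComp)
qed

lemma scwol_morph_quotient: "scwol_morph X.Y X'.Y lv led"
  unfolding scwol_morph_def using lv_closed led_closed sIni_led sTer_led led_sComp by blast

lemma scwol_nondeg_quotient_iff:
  "scwol_nondeg X.Y X'.Y lv led \<longleftrightarrow>
    (\<forall>x\<in>sVert X. bij_betw Le {a \<in> sEdge X. sIni X a = x} {a \<in> sEdge X'. sIni X' a = Lv x})"
proof -
  have "bij_betw led {A \<in> sEdge X.Y. sIni X.Y A = orbit G av x} {A \<in> sEdge X'.Y. sIni X'.Y A = lv (orbit G av x)}
    \<longleftrightarrow> bij_betw Le {a \<in> sEdge X. sIni X a = x} {a \<in> sEdge X'. sIni X' a = Lv x}"
    if x: "x \<in> sVert X" for x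
  proof (rule bij_betw_iff_conjugate)
    show "bij_betw (orbit G ae) {a \<in> sEdge X. sIni X a = x} {A \<in> sEdge X.Y. sIni X.Y A = orbit G av x}"
      using X.bij_betw_orbit_out_star x .
    show "bij_betw (orbit G' ae') {a \<in> sEdge X'. sIni X' a = Lv x}
        {A \<in> sEdge X'.Y. sIni X'.Y A = lv (orbit G av x)}"
      using X'.bij_betw_orbit_out_star Lv_closed x lv_orbit by simp
  qed (auto simp: Le_closed sIni_Le led_orbit)
  then show ?thesis
    unfolding scwol_nondeg_def using scwol_morph_quotient by (auto simp: X.quotient_simps)
qed

lemma in_star_bij_av:
  assumes x: "x \<in> sVert X" and g: "g \<in> carrier G"
  shows "bij_betw Le {a \<in> sEdge X. sTer X a = av g x} {a \<in> sEdge X'. sTer X' a = Lv (av g x)}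
    \<longleftrightarrow> bij_betw Le {a \<in> sEdge X. sTer X a = x} {a \<in> sEdge X'. sTer X' a = Lv x}"
proof (rule bij_betw_iff_conjugate)
  show "bij_betw (ae g) {a \<in> sEdge X. sTer X a = x} {a \<in> sEdge X. sTer X a = av g x}"
    using X.bij_betw_ae_in_star g x .
  show "bij_betw (ae' (\<Lambda> g)) {a \<in> sEdge X'. sTer X' a = Lv x} {a \<in> sEdge X'. sTer X' a = Lv (av g x)}"
    using X'.bij_betw_ae_in_star g x by (simp add: Lv_closed Lv_av)
qed (use g in \<open>auto simp: Le_closed sTer_Le Le_ae\<close>)

end

locale induced_cog_morph =
  equivariant_scwol_morph G X av ae G' X' av' ae' \<Lambda> Lv Le +
  X: scwol_action_choice G X av ae bar h + X': scwol_action_choice G' X' av' ae' bar' h'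
  for G :: "'g monoid" and X :: "('v, 'e) scwol" and av ae
    and G' :: "'h monoid" and X' :: "('w, 'f) scwol" and av' ae'
    and \<Lambda> :: "'g \<Rightarrow> 'h" and Lv :: "'v \<Rightarrow> 'w" and Le :: "'e \<Rightarrow> 'f"
    and bar :: "'v set \<Rightarrow> 'v" and h :: "'e set \<Rightarrow> 'g" and bar' :: "'w set \<Rightarrow> 'w" and h' :: "'f set \<Rightarrow> 'h" +
  fixes k :: "'v set \<Rightarrow> 'h"
  assumes k_closed: "\<sigma> \<in> sVert X.Y \<Longrightarrow> k \<sigma> \<in> carrier G'"
    and av_k_Lv_bar: "\<sigma> \<in> sVert X.Y \<Longrightarrow> av' (k \<sigma>) (Lv (bar \<sigma>)) = bar' (lv \<sigma>)"
begin

abbreviation phi :: "'v set \<Rightarrow> 'g \<Rightarrow> 'h" where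
  "phi \<equiv> induced_cog_v G' \<Lambda> k"

abbreviation lam :: "'e set \<Rightarrow> 'h" where
  "lam \<equiv> induced_cog_e G' X \<Lambda> h h' led k"

lemma lam_eq:
  "lam A = k (sTer X.Y A) \<otimes>\<^bsub>G'\<^esub> \<Lambda> (h A) \<otimes>\<^bsub>G'\<^esub> inv\<^bsub>G'\<^esub> k (sIni X.Y A) \<otimes>\<^bsub>G'\<^esub> inv\<^bsub>G'\<^esub> h' (led A)"
  by (simp add: induced_cog_e_def X.quotient_simps)

lemma lam_closed: "A \<in> sEdge X.Y \<Longrightarrow> lam A \<in> carrier G'"
  by (simp add: lam_eq k_closed X.Y.sIni_closed X.Y.sTer_closed X.h_closed X'.h_closed led_closed)

lemma phi_closed: "\<sigma> \<in> sVert X.Y \<Longrightarrow> g \<in> carrier G \<Longrightarrow> phi \<sigma> g \<in> carrier G'"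
  by (simp add: induced_cog_v_def k_closed)

lemma ae_phi:
  assumes "\<sigma> \<in> sVert X.Y" "g \<in> carrier G" "a \<in> sEdge X"
  shows "ae' (phi \<sigma> g) (ae' (k \<sigma>) (Le a)) = ae' (k \<sigma>) (Le (ae g a))"
  using assms k_closed
  by (simp add: induced_cog_v_def X'.E.act_mult X'.E.act_closed X'.E.inv_act_cancel Le_closed Le_ae)

lemma av_phi:
  assumes "\<sigma> \<in> sVert X.Y" "g \<in> carrier G" "v \<in> sVert X"
  shows "av' (phi \<sigma> g) (av' (k \<sigma>) (Lv v)) = av' (k \<sigma>) (Lv (av g v))"
  using assms k_closed
  by (simp add: induced_cog_v_def X'.V.act_mult X'.V.act_closed X'.V.inv_act_cancel Lv_closed Lv_av)

lemma phi_in_stab: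
  assumes \<sigma>: "\<sigma> \<in> sVert X.Y" and g: "g \<in> stab G av (bar \<sigma>)"
  shows "phi \<sigma> g \<in> stab G' av' (bar' (lv \<sigma>))"
  using av_phi [OF \<sigma> _ X.bar_closed [OF \<sigma>]] g av_k_Lv_bar [OF \<sigma>] phi_closed [OF \<sigma>]
  by (auto simp: stab_def)

lemma phi_hom:
  assumes \<sigma>: "\<sigma> \<in> sVert X.Y"
  shows "phi \<sigma> \<in> hom (X.Gs \<sigma>) (X'.Gs (lv \<sigma>))"
proof (rule homI)
  show "phi \<sigma> g \<in> carrier (X'.Gs (lv \<sigma>))" if "g \<in> carrier (X.Gs \<sigma>)" for g
    using phi_in_stab \<sigma> that by (simp add: X.carrier_Gs X'.carrier_Gs)
  show "phi \<sigma> (g \<otimes>\<^bsub>X.Gs \<sigma>\<^esub> g') = phi \<sigma> g \<otimes>\<^bsub>X'.Gs (lv \<sigma>)\<^esub> phi \<sigma> g'"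
    if "g \<in> carrier (X.Gs \<sigma>)" "g' \<in> carrier (X.Gs \<sigma>)" for g g'
    using that k_closed [OF \<sigma>]
    by (auto simp: X.carrier_Gs X.mult_Gs X'.mult_Gs induced_cog_v_def stab_def X'.G.group_simps)
qed

lemma lift_edge_led:
  assumes A: "A \<in> sEdge X.Y"
  shows "X'.lift (led A) = ae' (k (sIni X.Y A)) (Le (X.lift A))"
proof (rule X'.lift_edge_eqI)
  have k: "k (sIni X.Y A) \<in> carrier G'" using k_closed X.Y.sIni_closed A by blast
  have "led A = orbit G' ae' (Le (X.lift A))"
    using X.orbit_lift_edge [OF A] led_orbit X.lift_edge_closed [OF A] by metis
  then show "ae' (k (sIni X.Y A)) (Le (X.lift A)) \<in> led A"
    using k by (metis orbitI)
  show "led A \<in> sEdge X'.Y" using led_closed A .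
  show "sIni X' (ae' (k (sIni X.Y A)) (Le (X.lift A))) = bar' (sIni X'.Y (led A))"
    using k A av_k_Lv_bar X.Y.sIni_closed
    by (simp add: X'.sIni_ae Le_closed X.lift_edge_closed sIni_Le X.sIni_lift_edge sIni_led)
qed

lemma ae_lam_terminal_lift:
  assumes A: "A \<in> sEdge X.Y"
  shows "ae' (lam A) (X'.terminal_lift (led A)) = ae' (k (sTer X.Y A)) (Le (X.terminal_lift A))"
proof -
  have c: "k (sIni X.Y A) \<in> carrier G'" "k (sTer X.Y A) \<in> carrier G'" "\<Lambda> (h A) \<in> carrier G'"
    "h' (led A) \<in> carrier G'"
    using k_closed X.Y.sIni_closed X.Y.sTer_closed A X.h_closed X'.h_closed led_closed by auto
  have l: "X.lift A \<in> sEdge X" "X'.lift (led A) \<in> sEdge X'"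
    using X.lift_edge_closed X'.lift_edge_closed led_closed A by auto
  have "ae' (lam A) (X'.terminal_lift (led A))
      = ae' (k (sTer X.Y A)) (ae' (\<Lambda> (h A)) (ae' (inv\<^bsub>G'\<^esub> k (sIni X.Y A)) (X'.lift (led A))))"
    unfolding lam_eq X'.terminal_lift_def using c l
    by (simp add: X'.E.act_mult X'.E.act_closed X'.E.inv_act_cancel)
  also have "\<dots> = ae' (k (sTer X.Y A)) (ae' (\<Lambda> (h A)) (Le (X.lift A)))"
    unfolding lift_edge_led [OF A] using c l by (simp add: X'.E.inv_act_cancel Le_closed)
  also have "\<dots> = ae' (k (sTer X.Y A)) (Le (X.terminal_lift A))"
    unfolding X.terminal_lift_def using l A X.h_closed by (simp add: Le_ae)
  finally show ?thesis .
qed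

lemma lam_in_stab:
  assumes A: "A \<in> sEdge X.Y"
  shows "lam A \<in> stab G' av' (bar' (lv (sTer X.Y A)))"
proof -
  have "av' (lam A) (bar' (lv (sTer X.Y A))) = sTer X' (ae' (lam A) (X'.terminal_lift (led A)))"
    using A lam_closed X'.terminal_lift_closed led_closed
    by (simp add: X'.sTer_ae X'.sTer_terminal_lift sTer_led)
  also have "\<dots> = bar' (lv (sTer X.Y A))"
    unfolding ae_lam_terminal_lift [OF A]
    using A k_closed av_k_Lv_bar X.Y.sTer_closed X.terminal_lift_closed
    by (simp add: X'.sTer_ae Le_closed sTer_Le X.sTer_terminal_lift)
  finally show ?thesis using lam_closed A by (simp add: stab_def)
qed

lemma cog_morph_induced: "cog_morph X.Y X.Gs X.psi X.gab X'.Y X'.Gs X'.psi X'.gab lv led phi lam"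
  unfolding cog_morph_def
proof (intro conjI ballI allI impI)
  show "complex_of_groups X.Y X.Gs X.psi X.gab" "complex_of_groups X'.Y X'.Gs X'.psi X'.gab"
    by (rule X.complex_of_groups_assoc X'.complex_of_groups_assoc)+
  show "scwol_morph X.Y X'.Y lv led" by (rule scwol_morph_quotient)
  show "phi \<sigma> \<in> hom (X.Gs \<sigma>) (X'.Gs (lv \<sigma>))" if "\<sigma> \<in> sVert X.Y" for \<sigma>
    using phi_hom that .
next
  fix A assume A: "A \<in> sEdge X.Y"
  show "lam A \<in> carrier (X'.Gs (lv (sTer X.Y A)))"
    using lam_in_stab A by (simp add: X'.carrier_Gs)
  have "inv\<^bsub>X'.Gs (lv (sTer X.Y A))\<^esub> lam A = inv\<^bsub>G'\<^esub> lam A"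
    using X'.inv_Gs lv_closed X.Y.sTer_closed lam_in_stab A by blast
  moreover have "k (sIni X.Y A) \<in> carrier G'" "k (sTer X.Y A) \<in> carrier G'" "h A \<in> carrier G"
    "h' (led A) \<in> carrier G'"
    using k_closed X.Y.sIni_closed X.Y.sTer_closed A X.h_closed X'.h_closed led_closed by auto
  ultimately show "lam A \<otimes>\<^bsub>X'.Gs (lv (sTer X.Y A))\<^esub> X'.psi (led A) (phi (sIni X.Y A) g)
      \<otimes>\<^bsub>X'.Gs (lv (sTer X.Y A))\<^esub> inv\<^bsub>X'.Gs (lv (sTer X.Y A))\<^esub> lam A
    = phi (sTer X.Y A) (X.psi A g)" if "g \<in> carrier (X.Gs (sIni X.Y A))" for g
    using that by (simp add: X'.mult_Gs X.carrier_Gs stab_def lam_eq assoc_psi_def induced_cog_v_def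
        X'.G.group_simps)
next
  fix A B assume AB: "composable X.Y A B"
  then have "A \<in> sEdge X.Y" "B \<in> sEdge X.Y" "sComp X.Y A B \<in> sEdge X.Y"
    and iAtB: "sIni X.Y A = sTer X.Y B"
    using X.Y.sComp_closed by (auto simp: composable_def)
  then have "k (sIni X.Y A) \<in> carrier G'" "k (sTer X.Y A) \<in> carrier G'" "k (sIni X.Y B) \<in> carrier G'"
    "h A \<in> carrier G" "h B \<in> carrier G" "h (sComp X.Y A B) \<in> carrier G"
    "h' (led A) \<in> carrier G'" "h' (led B) \<in> carrier G'" "h' (led (sComp X.Y A B)) \<in> carrier G'"
    using k_closed X.Y.sIni_closed X.Y.sTer_closed X.h_closed X'.h_closed led_closed by auto
  then show "phi (sTer X.Y A) (X.gab A B) \<otimes>\<^bsub>X'.Gs (lv (sTer X.Y A))\<^esub> lam (sComp X.Y A B)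
    = lam A \<otimes>\<^bsub>X'.Gs (lv (sTer X.Y A))\<^esub> X'.psi (led A) (lam B)
      \<otimes>\<^bsub>X'.Gs (lv (sTer X.Y A))\<^esub> X'.gab (led A) (led B)"
    unfolding X'.mult_Gs lam_eq X.Y.sIni_sComp [OF AB] X.Y.sTer_sComp [OF AB] assoc_twist_def
      led_sComp [OF AB, symmetric]
    using iAtB by (simp add: assoc_psi_def induced_cog_v_def X'.G.group_simps)
qed

lemma phi_mult_lam_in_lift_coset:
  assumes A: "A \<in> sEdge X.Y" and g: "g \<in> X.lift_coset A e"
  shows "phi (sTer X.Y A) g \<otimes>\<^bsub>G'\<^esub> lam A \<in> X'.lift_coset (led A) (ae' (k (sTer X.Y A)) (Le e))"
proof -
  let ?s = "sTer X.Y A"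
  have s: "?s \<in> sVert X.Y" using X.Y.sTer_closed A .
  have g: "g \<in> stab G av (bar ?s)" "ae g (X.terminal_lift A) = e"
    using g by (auto simp: X.lift_coset_def)
  then have gc: "g \<in> carrier G" by (simp add: stab_def)
  have "phi ?s g \<otimes>\<^bsub>G'\<^esub> lam A \<in> stab G' av' (bar' (lv ?s))"
    using X'.V.stab_mult_closed X'.bar_closed lv_closed s phi_in_stab g(1) lam_in_stab A by blast
  moreover have "ae' (phi ?s g \<otimes>\<^bsub>G'\<^esub> lam A) (X'.terminal_lift (led A)) = ae' (k ?s) (Le e)"
    using A s gc g(2) ae_phi [OF s gc X.terminal_lift_closed [OF A]] phi_closed lam_closed
      X'.terminal_lift_closed led_closed
    by (simp add: X'.E.act_mult ae_lam_terminal_lift)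
  ultimately show ?thesis
    using A by (simp add: X'.lift_coset_def sTer_led)
qed

lemma induced_coset_map:
  assumes A: "A \<in> sEdge X.Y" and e: "e \<in> A" "sTer X e = bar (sTer X.Y A)"
  shows "(phi (sTer X.Y A) ` X.lift_coset A e) <#>\<^bsub>X'.Gs (lv (sTer X.Y A))\<^esub> {lam A}
      <#>\<^bsub>X'.Gs (lv (sTer X.Y A))\<^esub> (X'.psi (led A) ` carrier (X'.Gs (sIni X'.Y (led A))))
    = X'.lift_coset (led A) (ae' (k (sTer X.Y A)) (Le e))"
    (is "?L = ?R")
proof -
  let ?K = "X'.psi (led A) ` carrier (X'.Gs (sIni X'.Y (led A)))"
  have coset: "?R = (\<Union>w\<in>?K. {p \<otimes>\<^bsub>G'\<^esub> w})" if "p \<in> ?R" for p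
    using X'.lift_coset_eq_l_coset [OF led_closed [OF A] that] A
    by (simp add: l_coset_def X'.mult_Gs sTer_led)
  obtain c where "c \<in> stab G av (bar (sTer X.Y A))" "e = ae c (X.terminal_lift A)"
    using X.lift_eq_ae_terminal_lift A e by blast
  then have c: "c \<in> X.lift_coset A e" by (simp add: X.lift_coset_def)
  show ?thesis
  proof (intro equalityI subsetI)
    fix u assume "u \<in> ?L"
    then obtain g w where g: "g \<in> X.lift_coset A e" and "w \<in> ?K"
      and "u = phi (sTer X.Y A) g \<otimes>\<^bsub>G'\<^esub> lam A \<otimes>\<^bsub>G'\<^esub> w"
      by (auto simp: set_mult_def X'.mult_Gs)
    then show "u \<in> ?R"
      using coset [OF phi_mult_lam_in_lift_coset [OF A g]] by blast
  next
    fix u assume "u \<in> ?R"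
    then obtain w where "w \<in> ?K" "u = phi (sTer X.Y A) c \<otimes>\<^bsub>G'\<^esub> lam A \<otimes>\<^bsub>G'\<^esub> w"
      using coset [OF phi_mult_lam_in_lift_coset [OF A c]] by blast
    then show "u \<in> ?L"
      using c by (auto simp: set_mult_def X'.mult_Gs)
  qed
qed

lemma covering_bij_iff:
  assumes \<sigma>: "\<sigma> \<in> sVert X.Y" and a': "a' \<in> sEdge X'.Y" "sTer X'.Y a' = lv \<sigma>"
  shows "bij_betw (\<lambda>(a, C). (phi \<sigma> ` C) <#>\<^bsub>X'.Gs (lv \<sigma>)\<^esub> {lam a}
        <#>\<^bsub>X'.Gs (lv \<sigma>)\<^esub> (X'.psi a' ` carrier (X'.Gs (sIni X'.Y a'))))
      {(a, C). a \<in> sEdge X.Y \<and> led a = a' \<and> sTer X.Y a = \<sigma> \<and>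
        C \<in> lcosets\<^bsub>X.Gs \<sigma>\<^esub> (X.psi a ` carrier (X.Gs (sIni X.Y a)))}
      (lcosets\<^bsub>X'.Gs (lv \<sigma>)\<^esub> (X'.psi a' ` carrier (X'.Gs (sIni X'.Y a'))))
    \<longleftrightarrow> bij_betw (\<lambda>e. ae' (k \<sigma>) (Le e))
      {e \<in> sEdge X. sTer X e = bar \<sigma> \<and> led (orbit G ae e) = a'} {e' \<in> a'. sTer X' e' = bar' (lv \<sigma>)}"
proof (rule bij_betw_iff_conjugate)
  show "bij_betw (\<lambda>e. (orbit G ae e, X.lift_coset (orbit G ae e) e))
      {e \<in> sEdge X. sTer X e = bar \<sigma> \<and> led (orbit G ae e) = a'}
      {(a, C). a \<in> sEdge X.Y \<and> led a = a' \<and> sTer X.Y a = \<sigma> \<and>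
        C \<in> lcosets\<^bsub>X.Gs \<sigma>\<^esub> (X.psi a ` carrier (X.Gs (sIni X.Y a)))}"
    using X.bij_betw_lift_coset_pairs [OF \<sigma>] .
  show "bij_betw (X'.lift_coset a') {e' \<in> a'. sTer X' e' = bar' (lv \<sigma>)}
      (lcosets\<^bsub>X'.Gs (lv \<sigma>)\<^esub> (X'.psi a' ` carrier (X'.Gs (sIni X'.Y a'))))"
    using X'.bij_betw_lift_coset [OF a'(1)] a'(2) by simp
  show "(\<lambda>e. ae' (k \<sigma>) (Le e)) ` {e \<in> sEdge X. sTer X e = bar \<sigma> \<and> led (orbit G ae e) = a'}
      \<subseteq> {e' \<in> a'. sTer X' e' = bar' (lv \<sigma>)}"
  proof (rule image_subsetI)
    fix e assume e: "e \<in> {e \<in> sEdge X. sTer X e = bar \<sigma> \<and> led (orbit G ae e) = a'}"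
    then have "ae' (k \<sigma>) (Le e) \<in> orbit G' ae' (Le e)" "orbit G' ae' (Le e) = a'"
      using k_closed \<sigma> led_orbit by (auto intro: orbitI)
    then show "ae' (k \<sigma>) (Le e) \<in> {e' \<in> a'. sTer X' e' = bar' (lv \<sigma>)}"
      using e k_closed \<sigma> av_k_Lv_bar by (simp add: led_orbit X'.sTer_ae Le_closed sTer_Le)
  qed
  fix e assume e: "e \<in> {e \<in> sEdge X. sTer X e = bar \<sigma> \<and> led (orbit G ae e) = a'}"
  then have "sTer X.Y (orbit G ae e) = \<sigma>"
    using \<sigma> by (simp add: X.sTer_quotient_orbit X.orbit_bar)
  then show "(\<lambda>(a, C). (phi \<sigma> ` C) <#>\<^bsub>X'.Gs (lv \<sigma>)\<^esub> {lam a}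
        <#>\<^bsub>X'.Gs (lv \<sigma>)\<^esub> (X'.psi a' ` carrier (X'.Gs (sIni X'.Y a'))))
      (orbit G ae e, X.lift_coset (orbit G ae e) e) = X'.lift_coset a' (ae' (k \<sigma>) (Le e))"
    using induced_coset_map [of "orbit G ae e" e] e
    by (simp add: X.orbit_in_quotient_sEdge X.E.orbit_self)
qed

text \<open>Conjugation by \<open>k \<sigma>\<close> identifies the edges of \<open>X'\<close> ending at \<open>Lv (bar \<sigma>)\<close> with those
  ending at \<open>bar' (lv \<sigma>)\<close>; sorting both sides by their orbit \<open>a'\<close> yields the sets of
  \<open>covering_bij_iff\<close>.\<close>
lemma covering_condition_iff_in_star_bij:
  assumes \<sigma>: "\<sigma> \<in> sVert X.Y"
  shows "(\<forall>a'\<in>sEdge X'.Y. sTer X'.Y a' = lv \<sigma> \<longrightarrow> bij_betw (\<lambda>e. ae' (k \<sigma>) (Le e))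
        {e \<in> sEdge X. sTer X e = bar \<sigma> \<and> led (orbit G ae e) = a'} {e' \<in> a'. sTer X' e' = bar' (lv \<sigma>)})
    \<longleftrightarrow> bij_betw Le {a \<in> sEdge X. sTer X a = bar \<sigma>} {a \<in> sEdge X'. sTer X' a = Lv (bar \<sigma>)}"
proof -
  let ?A = "{a \<in> sEdge X. sTer X a = bar \<sigma>}" and ?B = "{a \<in> sEdge X'. sTer X' a = bar' (lv \<sigma>)}"
  let ?C = "{a' \<in> sEdge X'.Y. sTer X'.Y a' = lv \<sigma>}"
  have k: "k \<sigma> \<in> carrier G'" and bar: "bar \<sigma> \<in> sVert X" and l\<sigma>: "lv \<sigma> \<in> sVert X'.Y"
    using k_closed X.bar_closed lv_closed \<sigma> by auto
  have "bij_betw Le ?A {a \<in> sEdge X'. sTer X' a = Lv (bar \<sigma>)} \<longleftrightarrow> bij_betw (ae' (k \<sigma>) \<circ> Le) ?A ?B"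
    using X'.bij_betw_ae_in_star [OF k Lv_closed [OF bar]] av_k_Lv_bar [OF \<sigma>]
    by (intro bij_betw_comp_iff2) (auto simp: Le_closed sTer_Le)
  also have "\<dots> \<longleftrightarrow> (\<forall>a'\<in>?C. bij_betw (ae' (k \<sigma>) \<circ> Le)
      {e \<in> ?A. led (orbit G ae e) = a'} {e' \<in> ?B. orbit G' ae' e' = a'})"
  proof (rule bij_betw_iff_fibres)
    show "orbit G' ae' ((ae' (k \<sigma>) \<circ> Le) e) = led (orbit G ae e)" if "e \<in> ?A" for e
      using that k X'.E.orbit_eq [of "Le e"] by (simp add: Le_closed led_orbit orbitI)
    show "(\<lambda>e. led (orbit G ae e)) ` ?A \<subseteq> ?C"
      using \<sigma> by (auto simp: led_closed X.orbit_in_quotient_sEdge sTer_led X.sTer_quotient_orbit X.orbit_bar)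
    show "orbit G' ae' ` ?B \<subseteq> ?C"
      using l\<sigma> by (auto simp: X'.orbit_in_quotient_sEdge X'.sTer_quotient_orbit X'.orbit_bar)
  qed
  also have "\<dots> \<longleftrightarrow> (\<forall>a'\<in>?C. bij_betw (\<lambda>e. ae' (k \<sigma>) (Le e))
      {e \<in> sEdge X. sTer X e = bar \<sigma> \<and> led (orbit G ae e) = a'} {e' \<in> a'. sTer X' e' = bar' (lv \<sigma>)})"
  proof -
    have "{e' \<in> ?B. orbit G' ae' e' = a'} = {e' \<in> a'. sTer X' e' = bar' (lv \<sigma>)}" if a': "a' \<in> ?C" for a'
    proof (intro equalityI subsetI)
      fix e' assume "e' \<in> {e' \<in> a'. sTer X' e' = bar' (lv \<sigma>)}"
      moreover from this have "e' \<in> sEdge X'" "a' = orbit G' ae' e'"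
        using a' X'.quotient_sEdge_subset X'.quotient_sEdge_eq_orbit by blast+
      ultimately show "e' \<in> {e' \<in> ?B. orbit G' ae' e' = a'}" by simp
    qed (auto simp: X'.E.orbit_self)
    then show ?thesis
      by (intro ball_cong refl bij_betw_cong) (auto simp: comp_def)
  qed
  finally show ?thesis by auto
qed

lemma in_star_bij_iff_at_bar:
  "(\<forall>\<sigma>\<in>sVert X.Y. bij_betw Le {a \<in> sEdge X. sTer X a = bar \<sigma>} {a \<in> sEdge X'. sTer X' a = Lv (bar \<sigma>)})
    \<longleftrightarrow> (\<forall>x\<in>sVert X. bij_betw Le {a \<in> sEdge X. sTer X a = x} {a \<in> sEdge X'. sTer X' a = Lv x})"
proof (intro iffI ballI)
  fix x assume bij: "\<forall>\<sigma>\<in>sVert X.Y.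
    bij_betw Le {a \<in> sEdge X. sTer X a = bar \<sigma>} {a \<in> sEdge X'. sTer X' a = Lv (bar \<sigma>)}"
    and x: "x \<in> sVert X"
  let ?\<sigma> = "orbit G av x"
  have \<sigma>: "?\<sigma> \<in> sVert X.Y" using x X.orbit_in_quotient_sVert by simp
  then have "x \<in> orbit G av (bar ?\<sigma>)" using X.orbit_bar x X.V.orbit_self by simp
  then obtain g where g: "g \<in> carrier G" "av g (bar ?\<sigma>) = x" by (metis orbitE)
  then show "bij_betw Le {a \<in> sEdge X. sTer X a = x} {a \<in> sEdge X'. sTer X' a = Lv x}"
    using in_star_bij_av [OF X.bar_closed [OF \<sigma>] g(1)] bij \<sigma> by simp
qed (simp add: X.bar_closed)

theorem cog_covering_induced_iff:
  "cog_covering X.Y X.Gs X.psi X.gab X'.Y X'.Gs X'.psi X'.gab lv led phi lam \<longleftrightarrow>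
    scwol_connected X'.Y \<and> (\<forall>\<sigma>\<in>sVert X.Y. inj_on (phi \<sigma>) (carrier (X.Gs \<sigma>))) \<and>
    (\<forall>x\<in>sVert X. bij_betw Le {a \<in> sEdge X. sIni X a = x} {a \<in> sEdge X'. sIni X' a = Lv x}) \<and>
    (\<forall>x\<in>sVert X. bij_betw Le {a \<in> sEdge X. sTer X a = x} {a \<in> sEdge X'. sTer X' a = Lv x})"
proof -
  have "(\<forall>a'\<in>sEdge X'.Y. \<forall>\<sigma>\<in>sVert X.Y. sTer X'.Y a' = lv \<sigma> \<longrightarrow>
      bij_betw (\<lambda>(a, C). (phi \<sigma> ` C) <#>\<^bsub>X'.Gs (lv \<sigma>)\<^esub> {lam a}
        <#>\<^bsub>X'.Gs (lv \<sigma>)\<^esub> (X'.psi a' ` carrier (X'.Gs (sIni X'.Y a'))))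
      {(a, C). a \<in> sEdge X.Y \<and> led a = a' \<and> sTer X.Y a = \<sigma> \<and>
        C \<in> lcosets\<^bsub>X.Gs \<sigma>\<^esub> (X.psi a ` carrier (X.Gs (sIni X.Y a)))}
      (lcosets\<^bsub>X'.Gs (lv \<sigma>)\<^esub> (X'.psi a' ` carrier (X'.Gs (sIni X'.Y a')))))
    \<longleftrightarrow> (\<forall>\<sigma>\<in>sVert X.Y. bij_betw Le {a \<in> sEdge X. sTer X a = bar \<sigma>}
      {a \<in> sEdge X'. sTer X' a = Lv (bar \<sigma>)})"
    using covering_bij_iff covering_condition_iff_in_star_bij by blast
  then show ?thesis
    unfolding cog_covering_def in_star_bij_iff_at_bar scwol_nondeg_quotient_iff
    using cog_morph_induced by blast
qed

lemma inj_on_\<Lambda>_if_inj_on_phi: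
  assumes Lv: "inj_on Lv (sVert X)" and X: "sVert X \<noteq> {}"
    and phi: "\<forall>\<sigma>\<in>sVert X.Y. inj_on (phi \<sigma>) (carrier (X.Gs \<sigma>))"
  shows "inj_on \<Lambda> (carrier G)"
proof (rule \<Lambda>.trivial_ker_imp_inj)
  obtain x where x: "x \<in> sVert X" using X by blast
  let ?\<sigma> = "orbit G av x"
  have \<sigma>: "?\<sigma> \<in> sVert X.Y" and bar: "bar ?\<sigma> \<in> sVert X"
    using X.orbit_in_quotient_sVert X.bar_closed x by auto
  have "u = \<one>\<^bsub>G\<^esub>" if u: "u \<in> carrier G" "\<Lambda> u = \<one>\<^bsub>G'\<^esub>" for u
  proof -
    have "Lv (av u (bar ?\<sigma>)) = Lv (bar ?\<sigma>)"
      using u bar by (simp add: Lv_av Lv_closed X'.V.act_one)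
    then have "u \<in> carrier (X.Gs ?\<sigma>)"
      using Lv bar u X.V.act_closed by (auto simp: X.carrier_Gs stab_def dest: inj_onD)
    moreover have "\<one>\<^bsub>G\<^esub> \<in> carrier (X.Gs ?\<sigma>)"
      using bar by (simp add: X.carrier_Gs stab_def X.V.act_one)
    moreover have "phi ?\<sigma> u = phi ?\<sigma> \<one>\<^bsub>G\<^esub>"
      using u k_closed [OF \<sigma>] by (simp add: induced_cog_v_def)
    ultimately show ?thesis
      using phi \<sigma> by (auto dest: inj_onD)
  qed
  then show "kernel G G' \<Lambda> = {\<one>\<^bsub>G\<^esub>}"
    by (auto simp: kernel_def)
qed

lemma inj_on_phi_if_inj_on_\<Lambda>:
  assumes \<Lambda>: "inj_on \<Lambda> (carrier G)" and \<sigma>: "\<sigma> \<in> sVert X.Y"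
  shows "inj_on (phi \<sigma>) (carrier (X.Gs \<sigma>))"
proof (rule inj_onI)
  fix g g' assume g: "g \<in> carrier (X.Gs \<sigma>)" "g' \<in> carrier (X.Gs \<sigma>)" "phi \<sigma> g = phi \<sigma> g'"
  then have "g \<in> carrier G" "g' \<in> carrier G" by (auto simp: X.carrier_Gs stab_def)
  moreover from this have "\<Lambda> g = \<Lambda> g'"
    using g(3) k_closed [OF \<sigma>] by (simp add: induced_cog_v_def X'.G.m_assoc)
  ultimately show "g = g'" using \<Lambda> by (auto dest: inj_onD)
qed

end

theorem mainTheorem9:
  fixes G :: "'g monoid" and X :: "('v, 'e) scwol"
    and av :: "'g \<Rightarrow> 'v \<Rightarrow> 'v" and ae :: "'g \<Rightarrow> 'e \<Rightarrow> 'e"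
    and G' :: "'h monoid" and X' :: "('w, 'f) scwol"
    and av' :: "'h \<Rightarrow> 'w \<Rightarrow> 'w" and ae' :: "'h \<Rightarrow> 'f \<Rightarrow> 'f"
    and \<Lambda> :: "'g \<Rightarrow> 'h" and Lv :: "'v \<Rightarrow> 'w" and Le :: "'e \<Rightarrow> 'f"
    and bar :: "'v set \<Rightarrow> 'v" and h :: "'e set \<Rightarrow> 'g"
    and bar' :: "'w set \<Rightarrow> 'w" and h' :: "'f set \<Rightarrow> 'h"
    and k :: "'v set \<Rightarrow> 'h"
  defines "Y \<equiv> quotient_scwol G X av ae"
    and "Y' \<equiv> quotient_scwol G' X' av' ae'"
    and "lv \<equiv> induced_map G' av' Lv"
    and "led \<equiv> induced_map G' ae' Le"
  assumes act: "scwol_action G X av ae"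
    and act': "scwol_action G' X' av' ae'"
    and sc: "scwol_simply_connected X"
    and sc': "scwol_simply_connected X'"
    and equiv: "equivariant_morph G X av ae G' X' av' ae' \<Lambda> Lv Le"
    and C: "valid_choice G X av ae bar h"
    and C': "valid_choice G' X' av' ae' bar' h'"
    and N: "\<forall>\<sigma>\<in>sVert Y. k \<sigma> \<in> carrier G' \<and> av' (k \<sigma>) (Lv (bar \<sigma>)) = bar' (lv \<sigma>)"
  shows "cog_covering
           Y (assoc_groups G av bar) (assoc_psi G h) (assoc_twist G X av ae h)
           Y' (assoc_groups G' av' bar') (assoc_psi G' h') (assoc_twist G' X' av' ae' h')
           lv led (induced_cog_v G' \<Lambda> k) (induced_cog_e G' X \<Lambda> h h' led k)
         \<longleftrightarrow> inj_on \<Lambda> (carrier G) \<and> scwol_iso X X' Lv Le"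
proof -
  interpret induced_cog_morph G X av ae G' X' av' ae' \<Lambda> Lv Le bar h bar' h' k
    using act act' equiv C C' N [unfolded Y_def lv_def] by unfold_locales blast+
  have conn: "scwol_connected X" and conn': "scwol_connected X'"
    using sc sc' by (simp_all add: scwol_simply_connected_def)
  show ?thesis
    unfolding Y_def Y'_def lv_def led_def cog_covering_induced_iff
  proof (intro iffI; elim conjE)
    assume phi: "\<forall>\<sigma>\<in>sVert X.Y. inj_on (phi \<sigma>) (carrier (X.Gs \<sigma>))"
      and out: "\<forall>x\<in>sVert X. bij_betw Le {a \<in> sEdge X. sIni X a = x} {a \<in> sEdge X'. sIni X' a = Lv x}"
      and "in": "\<forall>x\<in>sVert X. bij_betw Le {a \<in> sEdge X. sTer X a = x} {a \<in> sEdge X'. sTer X' a = Lv x}"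
    interpret star_bijective_morph X X' Lv Le
      using out "in" by unfold_locales auto
    have iso: "scwol_iso X X' Lv Le"
      using scwol_iso_if_simply_connected conn sc' .
    moreover have "inj_on \<Lambda> (carrier G)"
      using inj_on_\<Lambda>_if_inj_on_phi scwol_iso_bij [OF iso] conn phi
      by (auto simp: bij_betw_def scwol_connected_def)
    ultimately show "inj_on \<Lambda> (carrier G) \<and> scwol_iso X X' Lv Le" by blast
  next
    assume "inj_on \<Lambda> (carrier G)" "scwol_iso X X' Lv Le"
    then show "scwol_connected X'.Y \<and> (\<forall>\<sigma>\<in>sVert X.Y. inj_on (phi \<sigma>) (carrier (X.Gs \<sigma>))) \<and>
      (\<forall>x\<in>sVert X. bij_betw Le {a \<in> sEdge X. sIni X a = x} {a \<in> sEdge X'. sIni X' a = Lv x}) \<and>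
      (\<forall>x\<in>sVert X. bij_betw Le {a \<in> sEdge X. sTer X a = x} {a \<in> sEdge X'. sTer X' a = Lv x})"
      using X'.scwol_connected_quotient conn' inj_on_phi_if_inj_on_\<Lambda> star_bij_if_scwol_iso by blast
  qed
qed

end
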